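(* Assume (B1)–(B4) and consider the NL-IAPIAL method described in the context, with cycles $\mathcal C_l$, values $\tilde c_l$ and indices $k_l$. Let $R_\phi:=\phi^*-\phi_*+D_h^2/\lambda$ with $\phi^*:=\inf\{\phi(z):g(z)\preceq_{\mathcal K}0\}$, $\phi_*:=\inf_{z}\phi(z)$, and let $C_0:=\max\{\|p_0\|,\kappa_0\}/(\min\{1,\bar d\}\tau)$. Then for every $l\ge1$ and every $k\in\mathcal C_l$ with $k\ge k_{l-1}+2$ at which $p_k$ is computed, the quantity $\Delta_k=\frac{1}{k-k_{l-1}-1}[\mathcal L_{\tilde c_l}(z_{k_{l-1}+1};p_{k_{l-1}+1})-\mathcal L_{\tilde c_l}(z_k;p_k)]$ satisfies $$\min_{k_{l-1}+2\le j\le k}\|r_j\|^2\le\frac{2\lambda}{1-\sigma^2}\Big(\Delta_k+\frac{4C_0^2}{\tilde c_l}\Big),\qquad \Delta_k\le\frac{1}{k-k_{l-1}-1}\Big(R_\phi+\frac{9C_0^2}{2\tilde c_l}\Big).$$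
   Context: $\mathcal K\subseteq\mathbb{R}^\ell$ is a nonempty closed convex cone, $\mathcal K^*=\{y:\langle y,x\rangle\ge0\ \forall x\in\mathcal K\}$ its dual cone, $u\preceq_{\mathcal K}v$ means $v-u\in\mathcal K$, $\Pi_S$ is the Euclidean projection onto a closed convex set $S$, $\mathrm{dist}(y,S)$ the Euclidean distance. $\partial_\varepsilon\varphi(z):=\{u:\varphi(z')\ge\varphi(z)+\langle u,z'-z\rangle-\varepsilon\ \forall z'\}$, $\partial=\partial_0$. For differentiable $g:\mathbb{R}^n\to\mathbb{R}^\ell$, $\nabla g(z)\in\mathbb{R}^{n\times\ell}$ is the transpose of the Jacobian. $g$ is $\mathcal K$-convex if $g(tz'+(1-t)z)-tg(z')-(1-t)g(z)\preceq_{\mathcal K}0$ for all $z,z'$, $t\in[0,1]$. (B1) $h:\mathbb{R}^n\to(-\infty,\infty]$ proper lsc convex, $K_h$-Lipschitz on its domain; $\mathcal H:=\mathrm{dom}\,h$ compact with diameter $D_h$. (B2) $f$ differentiable on an open set containing $\mathcal H$; $m_f,L_f>0$ with $f(z')-f(z)-\langle\nabla f(z),z'-z\rangle\ge-\frac{m_f}{2}\|z'-z\|^2$ and $\|\nabla f(z')-\nabla f(z)\|\le L_f\|z'-z\|$ on $\mathcal H$. (B3) $g$ is $\mathcal K$-convex, differentiable, $\nabla g$ is $L_g$-Lipschitz on $\mathbb{R}^n$. (B4) there exist $\bar z\in\mathrm{int}\,\mathcal H$, $\tau\in(0,1]$ with $g(\bar z)\preceq_{\mathcal K}0$ and $\max\{\|\nabla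 g(z)p\|,|\langle p,g(\bar z)\rangle|\}\ge\tau\|p\|$ for all $z\in\mathcal H$, $p\in\mathcal K^*$. Constants: $B_f^{(1)}:=\sup_{\mathcal H}\|\nabla f\|$, $B_g^{(0)}:=\sup_{\mathcal H}\|g\|$, $B_g^{(1)}:=\sup_{\mathcal H}\|\nabla g\|$; $\bar d:=\mathrm{dist}(\bar z,\partial\mathcal H)$ ($\partial\mathcal H$ the boundary of $\mathcal H$); $\kappa_0:=2[K_h+B_f^{(1)}]D_h+[\frac{\sigma^2}{2(1-\sigma)^2}+2(\frac{1+\sigma}{1-\sigma})]\frac{D_h^2}{\lambda}$. Functions: $\phi=f+h$; $\mathcal L_c(z;p):=f(z)+h(z)+\frac1{2c}[\mathrm{dist}^2(p+cg(z),-\mathcal K)-\|p\|^2]$; $\widetilde{\mathcal L}_c(z;p):=\mathcal L_c(z;p)-h(z)$, with $\nabla_z\widetilde{\mathcal L}_c(z;p)=\nabla f(z)+\nabla g(z)\Pi_{\mathcal K^*}(p+cg(z))$; $\Lambda(c,p):=L_f+L_g\|p\|+c(B_g^{(0)}L_g+[B_g^{(1)}]^2)$. NL-IAPIAL method. Inputs: $\lambda\in(0,1/(2m_f)]$, $\sigma\in(0,1/\sqrt2]$, $c_1>0$, $(z_0,p_0)\in\mathcal H\times\mathbb{R}^\ell$, $(\hat\rho,\hat\eta)\in\mathbb{R}^2_{++}$. Set $\hat k=0$, $k=1$. Iteration $k$: (1) set $L^\psi_{k-1}:=\lambda\Lambda(c_k,p_{k-1})+1$, $\sigma_{k-1}:=\sigma/\sqrt{L^\psi_{k-1}}$,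 and obtain (by any procedure) $(z_k,v_k,\varepsilon_k)\in\mathbb{R}^n\times\mathbb{R}^n\times\mathbb{R}_+$ with $v_k\in\partial_{\varepsilon_k}(\lambda\mathcal L_{c_k}(\cdot;p_{k-1})+\frac12\|\cdot-z_{k-1}\|^2)(z_k)$ and $\|v_k\|^2+2\varepsilon_k\le\sigma_{k-1}^2\|v_k+z_{k-1}-z_k\|^2$. (2) Set $r_k:=v_k+z_{k-1}-z_k$, $\delta_k:=\varepsilon_k/\lambda$, $\hat z_k:=\mathrm{argmin}_u\{\lambda[\langle\nabla_z\widetilde{\mathcal L}_{c_k}(z_k;p_{k-1}),u-z_k\rangle+h(u)]-\langle r_k,u-z_k\rangle+\frac{L^\psi_{k-1}}2\|u-z_k\|^2\}$, $w_k:=\frac1\lambda[r_k+L^\psi_{k-1}(z_k-\hat z_k)]$, $\hat p_k:=\Pi_{\mathcal K^*}(p_{k-1}+c_kg(\hat z_k))$, $\hat q_k:=(p_{k-1}-\hat p_k)/c_k$, $\hat w_k:=w_k+\nabla_z\widetilde{\mathcal L}_{c_k}(\hat z_k;p_{k-1})-\nabla_z\widetilde{\mathcal L}_{c_k}(z_k;p_{k-1})$; if $\|\hat w_k\|\le\hat\rho$ and $\|\hat q_k\|\le\hat\eta$, stop. (3) $p_k:=\Pi_{\mathcal K^*}(p_{k-1}+c_kg(z_k))$. (4) If $k>\hat k+1$ and $\Delta_k:=\frac{1}{k-\hat k-1}[\mathcal L_{c_k}(z_{\hat k+1};p_{\hat k+1})-\mathcal L_{c_k}(z_k;p_k)]\le\frac{\lambda(1-\sigma^2)\hat\rho^2}{4(1+2\sigma)^2}$,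 set $c_{k+1}=2c_k$ and $\hat k=k$; otherwise $c_{k+1}=c_k$. (5) $k\leftarrow k+1$. Cycles: for $l\ge1$, $\tilde c_l:=2^{l-1}c_1$ and $\mathcal C_l:=\{k: c_k=\tilde c_l\}$ (over generated iterations $k$); $k_l$ is the largest index in $\mathcal C_l$ and $k_0:=0$, so $\mathcal C_l=\{k_{l-1}+1,\dots,k_l\}$ and the value of $\hat k$ during cycle $l$ is $k_{l-1}$. *)

theory Defs
  imports "HOL-Analysis.Analysis"
begin

text \<open>The ambient spaces R^n and R^l are abstract Euclidean spaces 'a and 'b.
The extended-valued function h (with values in (-inf,inf]) is represented by a real-valued
function h together with its effective domain H; h is +infinity outside H, so every
infimum / subgradient inequality over all points is taken over H only.
The transposed Jacobian applied to p, nabla g(z) p, is adjoint (g' z) p, where g' z is the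
(Frechet) derivative of g at z.\<close>

definition dual_cone :: "'b::real_inner set \<Rightarrow> 'b set" where
  "dual_cone K = {y. \<forall>x\<in>K. y \<bullet> x \<ge> 0}"

definition K_convex :: "'b::real_inner set \<Rightarrow> ('a::real_vector \<Rightarrow> 'b) \<Rightarrow> bool" where
  "K_convex K g \<longleftrightarrow> (\<forall>z z' t. 0 \<le> t \<and> t \<le> 1 \<longrightarrow>
      t *\<^sub>R g z' + (1 - t) *\<^sub>R g z - g (t *\<^sub>R z' + (1 - t) *\<^sub>R z) \<in> K)"

text \<open>epsilon-subdifferential of a function that equals F on its domain H and +infinity
outside H.\<close>
definition eps_subdiff :: "'a::real_inner set \<Rightarrow> ('a \<Rightarrow> real) \<Rightarrow> real \<Rightarrow> 'a \<Rightarrow> 'a set" where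
  "eps_subdiff H F \<epsilon> z = {u. z \<in> H \<and> (\<forall>z'\<in>H. F z' \<ge> F z + u \<bullet> (z' - z) - \<epsilon>)}"

definition projK :: "'b::euclidean_space set \<Rightarrow> 'b \<Rightarrow> 'b" where
  "projK K y = closest_point (dual_cone K) y"

definition augL :: "'b::euclidean_space set \<Rightarrow> ('a \<Rightarrow> real) \<Rightarrow> ('a \<Rightarrow> real) \<Rightarrow> ('a \<Rightarrow> 'b)
      \<Rightarrow> real \<Rightarrow> 'a \<Rightarrow> 'b \<Rightarrow> real" where
  "augL K f h g c z p = f z + h z
     + (1 / (2 * c)) * ((infdist (p + c *\<^sub>R g z) (uminus ` K))\<^sup>2 - (norm p)\<^sup>2)"

definition gradLt :: "'b::euclidean_space set \<Rightarrow> ('a::real_inner \<Rightarrow> 'a) \<Rightarrow> ('a \<Rightarrow> 'a \<Rightarrow> 'b) \<Rightarrow> ('a \<Rightarrow> 'b)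
      \<Rightarrow> real \<Rightarrow> 'a \<Rightarrow> 'b \<Rightarrow> 'a" where
  "gradLt K gf g' g c z p = gf z + adjoint (g' z) (projK K (p + c *\<^sub>R g z))"

definition prox_hat :: "'a::real_inner set \<Rightarrow> ('a \<Rightarrow> real) \<Rightarrow> real \<Rightarrow> 'a \<Rightarrow> 'a \<Rightarrow> real \<Rightarrow> 'a \<Rightarrow> 'a" where
  "prox_hat H h lam gv r L zk =
     (THE u. u \<in> H \<and> (\<forall>u'\<in>H.
        lam * (gv \<bullet> (u - zk) + h u) - r \<bullet> (u - zk) + L / 2 * (norm (u - zk))\<^sup>2
        \<le> lam * (gv \<bullet> (u' - zk) + h u') - r \<bullet> (u' - zk) + L / 2 * (norm (u' - zk))\<^sup>2))"

end

theory Submission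
  imports Defs
begin

text \<open>Inside a cycle the penalty parameter is a constant c. Each inexact proximal step lowers the
augmented Lagrangian with the old multiplier by at least (1 - sigma^2) / (2 lam) * norm (r j)^2, and
passing to the new multiplier raises it by at most norm (p j - p (j - 1))^2 / c <= 4 C0^2 / c.
The bound norm (p j) <= C0 comes from the regularity condition (B4): a multiplier that grows sees
the constraint violated in its own direction, so (B4) yields a point of H along which the proximal
subproblem decreases at rate min 1 dbar * tau * norm (p j); the inexactness criterion limits this
decrease and caps norm (p j) by kappa0 / (min 1 dbar * tau). Telescoping over the cycle and bounding
the minimum by the average gives the first inequality. For the second, the first iterate of the cycle
is compared with every feasible point through its proximal subproblem, which bounds the augmented
Lagrangian there by phi^* + Dh^2 / lam + 4 C0^2 / c, while it is at least phi_* - C0^2 / (2 c)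
at every iterate.\<close>

section \<open>Dual cones and the projection onto them\<close>

lemma zero_in_dual_cone: "0 \<in> dual_cone K"
  by (simp add: dual_cone_def)

lemma convex_dual_cone: "convex (dual_cone (K::'b::real_inner set))"
  unfolding dual_cone_def convex_def by (auto simp: inner_add_left)

lemma closed_dual_cone: "closed (dual_cone (K::'b::real_inner set))"
proof -
  have "dual_cone K = (\<Inter>x\<in>K. {y. y \<bullet> x \<ge> 0})"
    by (auto simp: dual_cone_def)
  moreover have "closed {y. y \<bullet> x \<ge> (0::real)}" for x :: 'b
    using closed_halfspace_ge[of 0 x] by (simp add: inner_commute)
  ultimately show ?thesis by auto
qed

lemma cone_dual_cone: "cone (dual_cone (K::'b::real_inner set))"
  unfolding cone_def dual_cone_def by auto

locale closed_convex_cone =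
  fixes K :: "'b::euclidean_space set"
  assumes K_closed: "closed K" and K_convex: "convex K" and K_cone: "cone K" and K_nonempty: "K \<noteq> {}"
begin

lemma mem_if_nonneg_on_dual_cone:
  assumes "\<forall>a\<in>dual_cone K. a \<bullet> w \<ge> 0"
  shows "w \<in> K"
proof (rule ccontr)
  assume "w \<notin> K"
  then obtain a b where ab: "a \<bullet> w < b" "\<forall>x\<in>K. a \<bullet> x > b"
    using separating_hyperplane_closed_point[OF K_convex K_closed] by blast
  have "0 \<in> K"
    using K_nonempty K_cone unfolding cone_def by (metis ex_in_conv scale_zero_left order_refl)
  then have b0: "b < 0" using ab by auto
  have "a \<bullet> x \<ge> 0" if x: "x \<in> K" for x
  proof (rule ccontr)
    assume neg: "\<not> a \<bullet> x \<ge> 0"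
    \<comment> \<open>scaling x inside the cone would reach the hyperplane level b\<close>
    have "(b / (a \<bullet> x)) *\<^sub>R x \<in> K"
      using K_cone x neg b0 unfolding cone_def by (simp add: divide_nonpos_neg)
    moreover have "a \<bullet> ((b / (a \<bullet> x)) *\<^sub>R x) = b" using neg by simp
    ultimately show False using ab by fastforce
  qed
  then have "a \<in> dual_cone K" by (auto simp: dual_cone_def)
  then show False using assms ab b0 by fastforce
qed

lemma shows projK_in_dual_cone: "projK K y \<in> dual_cone K"
  and projK_orthogonal: "projK K y \<bullet> (projK K y - y) = 0"
  and projK_minus_in_cone: "projK K y - y \<in> K"
proof -
  let ?C = "dual_cone K" and ?q = "projK K y"
  show qin: "?q \<in> ?C" unfolding projK_def
    using closest_point_in_set[OF closed_dual_cone] zero_in_dual_cone by blast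
  have dot: "(y - ?q) \<bullet> (x - ?q) \<le> 0" if "x \<in> ?C" for x
    using any_closest_point_dot[OF convex_dual_cone closed_dual_cone qin that]
      closest_point_le[OF closed_dual_cone] unfolding projK_def by blast
  have "2 *\<^sub>R ?q \<in> ?C" using qin cone_dual_cone[of K] unfolding cone_def by simp
  from dot[OF this] dot[OF zero_in_dual_cone]
  have e: "(y - ?q) \<bullet> ?q = 0"
    by (simp add: algebra_simps scaleR_2 inner_diff_right inner_diff_left)
  then show "?q \<bullet> (?q - y) = 0"
    by (simp add: inner_diff_right inner_diff_left inner_commute)
  have "a \<bullet> (?q - y) \<ge> 0" if "a \<in> ?C" for a
    using dot[OF that] e by (simp add: inner_diff_right inner_diff_left inner_commute)
  then show "?q - y \<in> K" by (rule mem_if_nonneg_on_dual_cone[rule_format])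
qed

lemma minus_projK_mem_neg_cone: "y - projK K y \<in> uminus ` K"
  using projK_minus_in_cone by (metis image_eqI minus_diff_eq)

lemma infdist_neg_cone: "infdist y (uminus ` K) = norm (projK K y)"
proof (rule antisym)
  let ?q = "projK K y"
  show "infdist y (uminus ` K) \<le> norm ?q"
    using infdist_le[OF minus_projK_mem_neg_cone, of y y] by (simp add: dist_norm)
  have "norm ?q \<le> dist y w" if w: "w \<in> uminus ` K" for w
  proof -
    obtain x where x: "x \<in> K" "w = - x" using w by blast
    have "?q \<bullet> x \<ge> 0" using projK_in_dual_cone x(1) by (auto simp: dual_cone_def)
    moreover have "(dist y w)\<^sup>2 = (norm ?q)\<^sup>2 + 2 * (?q \<bullet> (y - ?q)) + 2 * (?q \<bullet> x) + (norm ((y - ?q) + x))\<^sup>2"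
      using x(2) by (simp add: dist_norm power2_norm_eq_inner algebra_simps inner_commute)
    moreover have "?q \<bullet> (y - ?q) = 0" using projK_orthogonal by (simp add: inner_diff_right)
    ultimately have "(norm ?q)\<^sup>2 \<le> (dist y w)\<^sup>2" by (smt (verit) zero_le_power2)
    then show ?thesis by (rule power2_le_imp_le) simp
  qed
  then show "norm ?q \<le> infdist y (uminus ` K)"
    using K_nonempty unfolding infdist_def by (auto intro: cINF_greatest)
qed

lemma norm_projK_le: "norm (projK K y) \<le> norm y"
proof -
  have "(norm (projK K y))\<^sup>2 = projK K y \<bullet> y"
    using projK_orthogonal[of y] by (simp add: power2_norm_eq_inner inner_diff_right)
  also have "\<dots> \<le> norm (projK K y) * norm y" by (rule norm_cauchy_schwarz)
  finally show ?thesis by (cases "projK K y = 0") (auto simp: power2_eq_square mult_le_cancel_left)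
qed

lemma inner_projK_nonneg_if_norm_grows:
  assumes "c > 0" and "norm p < norm (projK K (p + c *\<^sub>R y))"
  shows "projK K (p + c *\<^sub>R y) \<bullet> y \<ge> 0"
proof -
  let ?q = "projK K (p + c *\<^sub>R y)"
  have "c * (?q \<bullet> y) = (norm ?q)\<^sup>2 - ?q \<bullet> p"
    using projK_orthogonal[of "p + c *\<^sub>R y"] by (simp add: power2_norm_eq_inner inner_diff_right inner_add_right)
  moreover have "?q \<bullet> p \<le> norm ?q * norm p" by (rule norm_cauchy_schwarz)
  moreover have "norm ?q * norm p \<le> (norm ?q)\<^sup>2"
    using assms(2) by (simp add: power2_eq_square mult_left_mono)
  ultimately have "c * (?q \<bullet> y) \<ge> 0" by linarith
  then show ?thesis using \<open>c > 0\<close> by (simp add: zero_le_mult_iff)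
qed

end

section \<open>The augmented Lagrangian\<close>

lemma power2_norm_add_scaleR:
  "(norm (x + c *\<^sub>R d))\<^sup>2 = (norm x)\<^sup>2 + 2 * c * (x \<bullet> d) + c\<^sup>2 * (norm (d::'a::real_inner))\<^sup>2"
  unfolding power2_norm_eq_inner
  by (simp add: inner_add_left inner_add_right inner_commute power2_eq_square algebra_simps)

lemma augL_ge:
  assumes "c > 0"
  shows "augL K f h g c z p \<ge> f z + h z - (norm p)\<^sup>2 / (2 * c)"
proof -
  have "(1 / (2 * c)) * ((infdist (p + c *\<^sub>R g z) (uminus ` K))\<^sup>2 - (norm p)\<^sup>2)
      \<ge> (1 / (2 * c)) * (0 - (norm p)\<^sup>2)"
    using assms by (intro mult_left_mono) auto
  then show ?thesis unfolding augL_def by simp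
qed

lemma augL_le_of_feasible:
  assumes "cone K" and "c > 0" and "- g z \<in> K"
  shows "augL K f h g c z p \<le> f z + h z"
proof -
  have "c *\<^sub>R (- g z) \<in> K"
    using assms unfolding cone_def by auto
  then have "c *\<^sub>R g z \<in> uminus ` K"
    by (metis image_eqI minus_minus scaleR_minus_right)
  then have "infdist (p + c *\<^sub>R g z) (uminus ` K) \<le> norm p"
    using infdist_le[of "c *\<^sub>R g z" "uminus ` K" "p + c *\<^sub>R g z"] by (simp add: dist_norm)
  then have "(infdist (p + c *\<^sub>R g z) (uminus ` K))\<^sup>2 \<le> (norm p)\<^sup>2"
    by (rule power_mono[OF _ infdist_nonneg])
  then have "(1 / (2 * c)) * ((infdist (p + c *\<^sub>R g z) (uminus ` K))\<^sup>2 - (norm p)\<^sup>2) \<le> 0"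
    using assms(2) by (intro mult_nonneg_nonpos) auto
  then show ?thesis unfolding augL_def by simp
qed

context closed_convex_cone
begin

lemma augL_update_multiplier_le:
  assumes "c > 0" and q: "q = projK K (p + c *\<^sub>R g z)"
  shows "augL K f h g c z q \<le> augL K f h g c z p + (norm (q - p))\<^sup>2 / c"
proof -
  \<comment> \<open>the point p + c g z - q of -K bounds the distance of q + c g z to -K by norm (2q - p)\<close>
  have "p + c *\<^sub>R g z - q \<in> uminus ` K" using minus_projK_mem_neg_cone q by simp
  then have "infdist (q + c *\<^sub>R g z) (uminus ` K) \<le> norm (2 *\<^sub>R q - p)"
    using infdist_le[of _ "uminus ` K" "q + c *\<^sub>R g z"] by (force simp: dist_norm algebra_simps scaleR_2)
  then have d: "(infdist (q + c *\<^sub>R g z) (uminus ` K))\<^sup>2 \<le> (norm (2 *\<^sub>R q - p))\<^sup>2"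
    by (rule power_mono[OF _ infdist_nonneg])
  have "augL K f h g c z q - augL K f h g c z p
      = (1 / (2 * c)) * ((infdist (q + c *\<^sub>R g z) (uminus ` K))\<^sup>2 - 2 * (norm q)\<^sup>2 + (norm p)\<^sup>2)"
    unfolding augL_def infdist_neg_cone q by (simp add: algebra_simps)
  also have "\<dots> \<le> (1 / (2 * c)) * ((norm (2 *\<^sub>R q - p))\<^sup>2 - 2 * (norm q)\<^sup>2 + (norm p)\<^sup>2)"
    using d \<open>c > 0\<close> by (intro mult_left_mono) auto
  also have "\<dots> = (norm (q - p))\<^sup>2 / c"
    using \<open>c > 0\<close> by (simp add: power2_norm_eq_inner inner_diff_left inner_diff_right inner_commute field_simps)
  finally show ?thesis by simp
qed

lemma augL_increment_le:
  assumes "c > 0" and q: "q = projK K (p + c *\<^sub>R g z)"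
  shows "augL K f h g c z' p - augL K f h g c z p
    \<le> (f z' - f z) + (h z' - h z) + q \<bullet> (g z' - g z) + c / 2 * (norm (g z' - g z))\<^sup>2"
proof -
  have "p + c *\<^sub>R g z - q \<in> uminus ` K" using minus_projK_mem_neg_cone q by simp
  then have "infdist (p + c *\<^sub>R g z') (uminus ` K) \<le> norm (q + c *\<^sub>R (g z' - g z))"
    using infdist_le[of _ "uminus ` K" "p + c *\<^sub>R g z'"] by (force simp: dist_norm algebra_simps)
  then have d: "(infdist (p + c *\<^sub>R g z') (uminus ` K))\<^sup>2 \<le> (norm (q + c *\<^sub>R (g z' - g z)))\<^sup>2"
    by (rule power_mono[OF _ infdist_nonneg])
  have "augL K f h g c z' p - augL K f h g c z p
      = (f z' - f z) + (h z' - h z) + (1 / (2 * c)) * ((infdist (p + c *\<^sub>R g z') (uminus ` K))\<^sup>2 - (norm q)\<^sup>2)"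
    unfolding augL_def infdist_neg_cone q by (simp add: algebra_simps)
  also have "\<dots> \<le> (f z' - f z) + (h z' - h z) + (1 / (2 * c)) * ((norm (q + c *\<^sub>R (g z' - g z)))\<^sup>2 - (norm q)\<^sup>2)"
    using d \<open>c > 0\<close> by (simp add: divide_right_mono)
  also have "\<dots> = (f z' - f z) + (h z' - h z) + q \<bullet> (g z' - g z) + c / 2 * (norm (g z' - g z))\<^sup>2"
    using \<open>c > 0\<close> unfolding power2_norm_add_scaleR by (simp add: field_simps power2_eq_square)
  finally show ?thesis .
qed

end

section \<open>Smoothness\<close>

lemma onorm_le_onorm_of_adjoint:
  fixes A :: "'a::euclidean_space \<Rightarrow> 'b::euclidean_space" and M :: "'b \<Rightarrow> 'a"
  assumes M: "bounded_linear M" and AM: "\<And>d q. A d \<bullet> q = d \<bullet> M q"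
  shows "onorm A \<le> onorm M"
proof (rule onorm_le)
  fix d
  have "norm (A d) * norm (A d) = d \<bullet> M (A d)"
    using AM[of d "A d"] by (simp add: power2_norm_eq_inner[symmetric] power2_eq_square)
  also have "\<dots> \<le> norm d * norm (M (A d))" by (rule norm_cauchy_schwarz)
  also have "\<dots> \<le> norm d * (onorm M * norm (A d))" by (intro mult_left_mono onorm[OF M]) simp
  finally have "norm (A d) * norm (A d) \<le> (onorm M * norm d) * norm (A d)" by (simp add: algebra_simps)
  then show "norm (A d) \<le> onorm M * norm d"
    using onorm_pos_le[OF M] by (cases "A d = 0") (auto simp: mult_le_cancel_right)
qed

lemma onorm_le_onorm_adjoint:
  fixes A :: "'a::euclidean_space \<Rightarrow> 'b::euclidean_space"
  assumes "linear A"
  shows "onorm A \<le> onorm (adjoint A)"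
  using adjoint_linear[OF assms] adjoint_works[OF assms]
  by (intro onorm_le_onorm_of_adjoint) (simp_all add: linear_conv_bounded_linear[symmetric])

lemma onorm_diff_le_onorm_adjoint_diff:
  fixes A B :: "'a::euclidean_space \<Rightarrow> 'b::euclidean_space"
  assumes "linear A" "linear B"
  shows "onorm (A - B) \<le> onorm (\<lambda>q. adjoint A q - adjoint B q)"
proof (rule onorm_le_onorm_of_adjoint)
  show "bounded_linear (\<lambda>q. adjoint A q - adjoint B q)"
    using adjoint_linear[OF assms(1)] adjoint_linear[OF assms(2)]
    by (intro bounded_linear_sub) (simp_all add: linear_conv_bounded_linear[symmetric])
  show "(A - B) d \<bullet> q = d \<bullet> (adjoint A q - adjoint B q)" for d q
    using adjoint_works[OF assms(1)] adjoint_works[OF assms(2)] by (simp add: inner_diff_left inner_diff_right)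
qed

lemma linearization_error_le:
  fixes F :: "'a::real_normed_vector \<Rightarrow> 'b::real_normed_vector"
  assumes "convex S" "x \<in> S" "y \<in> S"
    and deriv: "\<And>w. w \<in> S \<Longrightarrow> (F has_derivative F' w) (at w within S)"
    and lip: "\<And>w. w \<in> S \<Longrightarrow> onorm (F' w - F' x) \<le> L * norm (w - x)" and "L \<ge> 0"
  shows "norm (F y - F x - F' x (y - x)) \<le> L * (norm (y - x))\<^sup>2"
proof -
  have seg: "closed_segment x y \<subseteq> S" by (rule closed_segment_subset[OF assms(2,3,1)])
  have "norm (F y - F x - F' x (y - x)) \<le> norm (y - x) * (L * norm (y - x))"
  proof (rule differentiable_bound_linearization[where S = "closed_segment x y"])
    show "x + t *\<^sub>R (y - x) \<in> closed_segment x y" if "t \<in> {0..1}" for t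
      using that unfolding in_segment by (intro exI[of _ t]) (auto simp: algebra_simps)
    show "(F has_derivative F' w) (at w within closed_segment x y)" if "w \<in> closed_segment x y" for w
      using deriv seg that has_derivative_subset by blast
    show "onorm (F' w - F' x) \<le> L * norm (y - x)" if "w \<in> closed_segment x y" for w
    proof -
      have "norm (w - x) \<le> norm (y - x)" using segment_bound1[OF that] .
      then show ?thesis using lip[of w] seg that \<open>L \<ge> 0\<close> by (meson mult_left_mono order_trans subsetD)
    qed
  qed simp
  then show ?thesis by (simp add: power2_eq_square algebra_simps)
qed

lemma K_convex_gradient_ineq:
  fixes g :: "'a::euclidean_space \<Rightarrow> 'b::euclidean_space"
  assumes "K_convex K g" and deriv: "(g has_derivative g' x) (at x)" and q: "q \<in> dual_cone K"
  shows "q \<bullet> g' x (y - x) \<le> q \<bullet> g y - q \<bullet> g x"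
proof -
  define \<phi> where "\<phi> t = q \<bullet> g (x + t *\<^sub>R (y - x))" for t
  have "convex_on UNIV \<phi>"
  proof (rule convex_onI)
    fix u t s :: real assume "0 < u" "u < 1"
    have "u *\<^sub>R g (x + s *\<^sub>R (y - x)) + (1 - u) *\<^sub>R g (x + t *\<^sub>R (y - x))
        - g (u *\<^sub>R (x + s *\<^sub>R (y - x)) + (1 - u) *\<^sub>R (x + t *\<^sub>R (y - x))) \<in> K"
      using assms(1) \<open>0 < u\<close> \<open>u < 1\<close> unfolding K_convex_def by simp
    moreover have "u *\<^sub>R (x + s *\<^sub>R (y - x)) + (1 - u) *\<^sub>R (x + t *\<^sub>R (y - x))
        = x + ((1 - u) * t + u * s) *\<^sub>R (y - x)"
      by (simp add: algebra_simps)
    ultimately show "\<phi> ((1 - u) *\<^sub>R t + u *\<^sub>R s) \<le> (1 - u) * \<phi> t + u * \<phi> s"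
      using q unfolding \<phi>_def dual_cone_def by (auto simp: inner_diff_right inner_add_right)
  qed simp
  moreover have "(\<phi> has_field_derivative q \<bullet> g' x (y - x)) (at 0)"
  proof -
    have "((\<lambda>t. x + t *\<^sub>R (y - x)) has_derivative (\<lambda>t. t *\<^sub>R (y - x))) (at 0)"
      by (auto intro!: derivative_eq_intros)
    from diff_chain_at[OF this] deriv
    have "((\<lambda>t. g (x + t *\<^sub>R (y - x))) has_derivative (\<lambda>t. g' x (t *\<^sub>R (y - x)))) (at 0)"
      by (simp add: o_def)
    then have "((\<lambda>t. q \<bullet> g (x + t *\<^sub>R (y - x))) has_derivative (\<lambda>t. q \<bullet> g' x (t *\<^sub>R (y - x)))) (at 0)"
      by (rule has_derivative_inner_right)
    moreover have "(\<lambda>t. q \<bullet> g' x (t *\<^sub>R (y - x))) = (*) (q \<bullet> g' x (y - x))"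
      using linear_scale[OF has_derivative_linear[OF deriv]] by (auto simp: mult.commute)
    ultimately show ?thesis unfolding \<phi>_def has_field_derivative_def by simp
  qed
  ultimately have "\<phi> 1 - \<phi> 0 \<ge> q \<bullet> g' x (y - x) * (1 - 0)"
    by (intro convex_on_imp_above_tangent[where A = UNIV]) auto
  then show ?thesis unfolding \<phi>_def by simp
qed

section \<open>Inexact proximal steps\<close>

lemma inexact_prox_descent:
  assumes sub: "v \<in> eps_subdiff H (\<lambda>u. lam * F u + 1 / 2 * (norm (u - z0))\<^sup>2) e z" and "z0 \<in> H"
    and err: "(norm v)\<^sup>2 + 2 * e \<le> s * (norm (v + z0 - z))\<^sup>2" and "s \<le> \<sigma>\<^sup>2"
  shows "(1 - \<sigma>\<^sup>2) / 2 * (norm (v + z0 - z))\<^sup>2 \<le> lam * (F z0 - F z)"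
proof -
  have "lam * F z + 1 / 2 * (norm (z - z0))\<^sup>2 + v \<bullet> (z0 - z) - e \<le> lam * F z0"
    using sub \<open>z0 \<in> H\<close> unfolding eps_subdiff_def by force
  moreover have "(norm (v + z0 - z))\<^sup>2 = (norm v)\<^sup>2 + 2 * (v \<bullet> (z0 - z)) + (norm (z - z0))\<^sup>2"
    by (simp add: power2_norm_eq_inner inner_add_left inner_add_right inner_diff_left inner_diff_right
        inner_commute algebra_simps)
  moreover have "s * (norm (v + z0 - z))\<^sup>2 \<le> \<sigma>\<^sup>2 * (norm (v + z0 - z))\<^sup>2"
    using \<open>s \<le> \<sigma>\<^sup>2\<close> by (intro mult_right_mono) auto
  moreover have "(1 - \<sigma>\<^sup>2) / 2 * (norm (v + z0 - z))\<^sup>2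
      = (norm (v + z0 - z))\<^sup>2 / 2 - \<sigma>\<^sup>2 * (norm (v + z0 - z))\<^sup>2 / 2"
    by (simp add: left_diff_distrib diff_divide_distrib)
  moreover have "lam * (F z0 - F z) = lam * F z0 - lam * F z" by (simp add: algebra_simps)
  ultimately show ?thesis using err by linarith
qed

lemma inexact_prox_value_le:
  assumes sub: "v \<in> eps_subdiff H (\<lambda>u. lam * F u + 1 / 2 * (norm (u - z0))\<^sup>2) e z" and "x \<in> H"
    and err: "(norm v)\<^sup>2 + 2 * e \<le> s * (norm (v + z0 - z))\<^sup>2" and "s \<le> 1/2" and "e \<ge> 0"
  shows "lam * F z \<le> lam * F x + (norm (x - z0))\<^sup>2"
proof -
  have sg: "lam * F z + 1 / 2 * (norm (z - z0))\<^sup>2 + v \<bullet> (x - z) - e \<le> lam * F x + 1 / 2 * (norm (x - z0))\<^sup>2"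
    using sub \<open>x \<in> H\<close> unfolding eps_subdiff_def by force
  have "s * (norm (v + z0 - z))\<^sup>2 \<le> 1/2 * (norm (v + z0 - z))\<^sup>2"
    using \<open>s \<le> 1/2\<close> by (intro mult_right_mono) auto
  moreover have "(norm (v + z0 - z))\<^sup>2 = (norm v)\<^sup>2 - 2 * (v \<bullet> (z - z0)) + (norm (z - z0))\<^sup>2"
    by (simp add: power2_norm_eq_inner inner_add_left inner_add_right inner_diff_left inner_diff_right
        inner_commute algebra_simps)
  moreover have "- (v \<bullet> (x - z0)) \<le> (norm (x - z0))\<^sup>2 / 2 + (norm v)\<^sup>2 / 2"
    using norm_cauchy_schwarz[of "- v" "x - z0"] sum_squares_bound[of "norm v" "norm (x - z0)"]
    by (simp add: power2_eq_square algebra_simps)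
  moreover have "v \<bullet> (x - z) = v \<bullet> (x - z0) - v \<bullet> (z - z0)" by (simp add: inner_diff_right)
  ultimately show ?thesis using sg err \<open>e \<ge> 0\<close> by linarith
qed

lemma norm_prox_residual_le:
  assumes err: "(norm v)\<^sup>2 + 2 * e \<le> s * (norm (v + z0 - z))\<^sup>2" and "s \<le> \<sigma>\<^sup>2" "0 \<le> \<sigma>" "\<sigma> < 1"
    and "e \<ge> 0" and "norm (z0 - z) \<le> D"
  shows "norm (v + z0 - z) \<le> D / (1 - \<sigma>)"
proof -
  have "(norm v)\<^sup>2 \<le> (\<sigma> * norm (v + z0 - z))\<^sup>2"
    using err \<open>e \<ge> 0\<close> mult_right_mono[OF \<open>s \<le> \<sigma>\<^sup>2\<close> zero_le_power2[of "norm (v + z0 - z)"]]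
    by (simp add: power_mult_distrib)
  then have "norm v \<le> \<sigma> * norm (v + z0 - z)" by (rule power2_le_imp_le) (simp add: \<open>0 \<le> \<sigma>\<close>)
  moreover have "norm (v + z0 - z) \<le> norm v + norm (z0 - z)"
    using norm_triangle_ineq[of v "z0 - z"] by (simp add: algebra_simps)
  moreover have "norm (v + z0 - z) * (1 - \<sigma>) = norm (v + z0 - z) - \<sigma> * norm (v + z0 - z)"
    by (simp add: algebra_simps)
  ultimately have "norm (v + z0 - z) * (1 - \<sigma>) \<le> D" using \<open>norm (z0 - z) \<le> D\<close> by linarith
  then show ?thesis using \<open>\<sigma> < 1\<close> by (simp add: le_divide_eq)
qed

lemma mem_if_dist_le_infdist_frontier:
  fixes S :: "'a::euclidean_space set"
  assumes "closed S" "x \<in> S" "dist x y \<le> infdist x (frontier S)"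
  shows "y \<in> S"
proof (rule ccontr)
  assume "y \<notin> S"
  then have "closed_segment x y \<inter> frontier S \<noteq> {}"
    using \<open>x \<in> S\<close> by (intro connected_Int_frontier) auto
  then obtain w where w: "w \<in> closed_segment x y" "w \<in> frontier S" by blast
  then have "w \<noteq> y" using \<open>y \<notin> S\<close> frontier_subset_closed[OF \<open>closed S\<close>] by blast
  then have "dist x w < dist x y"
    using w(1) between_mem_segment[of x y w] between[of x y w] by simp
  moreover have "infdist x (frontier S) \<le> dist x w" using w(2) by (rule infdist_le)
  ultimately show False using assms(3) by simp
qed

lemma infdist_frontier_pos:
  fixes S :: "'a::euclidean_space set"
  assumes "bounded S" "x \<in> interior S"
  shows "infdist x (frontier S) > 0"
proof (rule infdist_pos_not_in_closed)
  have "S \<noteq> UNIV" using assms(1) by auto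
  then show "frontier S \<noteq> {}" using assms(2) interior_subset frontier_eq_empty by blast
  show "x \<notin> frontier S" using assms(2) by (simp add: frontier_def)
qed simp

locale iapial_problem = closed_convex_cone K
  for K :: "'b::euclidean_space set" +
  fixes H :: "'a::euclidean_space set" and h f :: "'a \<Rightarrow> real" and gf :: "'a \<Rightarrow> 'a"
    and g :: "'a \<Rightarrow> 'b" and g' :: "'a \<Rightarrow> 'a \<Rightarrow> 'b"
    and Kh Lf Lg tau :: real and zbar :: 'a and Dh Bf1 Bg0 Bg1 dbar :: real
  assumes H_compact: "compact H" and H_convex: "convex H"
    and h_convex: "convex_on H h" and Kh_nonneg: "0 \<le> Kh"
    and h_lipschitz: "\<forall>x\<in>H. \<forall>y\<in>H. \<bar>h x - h y\<bar> \<le> Kh * dist x y"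
    and f_deriv: "\<forall>x\<in>H. (f has_derivative (\<lambda>d. gf x \<bullet> d)) (at x)"
    and Lf_nonneg: "0 \<le> Lf" and gf_lipschitz: "\<forall>x\<in>H. \<forall>y\<in>H. norm (gf y - gf x) \<le> Lf * norm (y - x)"
    and g_K_convex: "K_convex K g" and g_deriv: "\<forall>x. (g has_derivative g' x) (at x)"
    and Lg_nonneg: "0 \<le> Lg"
    and adjoint_g'_lipschitz: "\<forall>x y. onorm (\<lambda>q. adjoint (g' x) q - adjoint (g' y) q) \<le> Lg * norm (x - y)"
    and zbar_interior: "zbar \<in> interior H" and tau_pos: "0 < tau" and tau_le_1: "tau \<le> 1"
    and zbar_feasible: "- g zbar \<in> K"
    and regularity: "\<forall>x\<in>H. \<forall>q\<in>dual_cone K. max (norm (adjoint (g' x) q)) \<bar>q \<bullet> g zbar\<bar> \<ge> tau * norm q"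
    and Dh_eq: "Dh = diameter H"
    and Bf1_eq: "Bf1 = Sup ((\<lambda>x. norm (gf x)) ` H)"
    and Bg0_eq: "Bg0 = Sup ((\<lambda>x. norm (g x)) ` H)"
    and Bg1_eq: "Bg1 = Sup ((\<lambda>x. onorm (adjoint (g' x))) ` H)"
    and dbar_eq: "dbar = infdist zbar (frontier H)"
begin

lemma zbar_in_H: "zbar \<in> H"
  using zbar_interior interior_subset by blast

lemma norm_diff_le_Dh: "x \<in> H \<Longrightarrow> y \<in> H \<Longrightarrow> norm (x - y) \<le> Dh"
  using diameter_bounded_bound[OF compact_imp_bounded[OF H_compact]] by (simp add: Dh_eq dist_norm)

lemma Dh_nonneg: "0 \<le> Dh"
  using norm_diff_le_Dh[OF zbar_in_H zbar_in_H] by simp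

lemma dbar_pos: "0 < dbar"
  unfolding dbar_eq by (rule infdist_frontier_pos[OF compact_imp_bounded[OF H_compact] zbar_interior])

lemma mem_H_if_near_zbar: "norm (y - zbar) \<le> dbar \<Longrightarrow> y \<in> H"
  using mem_if_dist_le_infdist_frontier[OF compact_imp_closed[OF H_compact] zbar_in_H]
  by (simp add: dbar_eq dist_norm norm_minus_commute)

lemma norm_gf_le: "x \<in> H \<Longrightarrow> norm (gf x) \<le> Bf1"
proof -
  have "norm (gf y) \<le> norm (gf zbar) + Lf * Dh" if "y \<in> H" for y
  proof -
    have "norm (gf y) \<le> norm (gf zbar) + norm (gf y - gf zbar)" by (rule norm_triangle_sub)
    also have "norm (gf y - gf zbar) \<le> Lf * Dh"
      using gf_lipschitz zbar_in_H that norm_diff_le_Dh[OF that zbar_in_H] Lf_nonneg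
      by (meson mult_left_mono order_trans)
    finally show ?thesis by simp
  qed
  then have "bdd_above ((\<lambda>x. norm (gf x)) ` H)" by (intro bdd_aboveI2) auto
  then show "x \<in> H \<Longrightarrow> norm (gf x) \<le> Bf1" unfolding Bf1_eq by (auto intro: cSup_upper)
qed

lemma norm_g_le: "x \<in> H \<Longrightarrow> norm (g x) \<le> Bg0"
proof -
  have "continuous_on H g"
    using g_deriv by (intro continuous_at_imp_continuous_on) (auto intro: has_derivative_continuous)
  then have "bounded (g ` H)" using compact_continuous_image[OF _ H_compact] compact_imp_bounded by blast
  then have "bdd_above ((\<lambda>x. norm (g x)) ` H)"
    unfolding bounded_iff by (auto intro: bdd_aboveI2)
  then show "x \<in> H \<Longrightarrow> norm (g x) \<le> Bg0" unfolding Bg0_eq by (auto intro: cSup_upper)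
qed

lemma Bg0_nonneg: "0 \<le> Bg0"
  using norm_g_le[OF zbar_in_H] norm_ge_zero order_trans by blast

lemma Bf1_nonneg: "0 \<le> Bf1"
  using norm_gf_le[OF zbar_in_H] norm_ge_zero order_trans by blast

lemma linear_g': "linear (g' x)"
  using g_deriv has_derivative_linear by blast

lemma onorm_adjoint_g'_le: "x \<in> H \<Longrightarrow> onorm (adjoint (g' x)) \<le> Bg1"
proof -
  have bl: "bounded_linear (adjoint (g' x))" for x
    using adjoint_linear[OF linear_g'] linear_conv_bounded_linear by blast
  have "onorm (adjoint (g' y)) \<le> onorm (adjoint (g' zbar)) + Lg * Dh" if "y \<in> H" for y
  proof -
    let ?D = "\<lambda>q. adjoint (g' y) q - adjoint (g' zbar) q"
    have "onorm (adjoint (g' y)) = onorm (\<lambda>q. adjoint (g' zbar) q + ?D q)" by simp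
    also have "\<dots> \<le> onorm (adjoint (g' zbar)) + onorm ?D"
      using bl by (intro onorm_triangle bounded_linear_sub) auto
    also have "onorm ?D \<le> Lg * Dh"
      using adjoint_g'_lipschitz norm_diff_le_Dh[OF that zbar_in_H] Lg_nonneg
      by (meson mult_left_mono order_trans)
    finally show ?thesis by simp
  qed
  then have "bdd_above ((\<lambda>x. onorm (adjoint (g' x))) ` H)" by (intro bdd_aboveI2) auto
  then show "x \<in> H \<Longrightarrow> onorm (adjoint (g' x)) \<le> Bg1" unfolding Bg1_eq by (auto intro: cSup_upper)
qed

lemma g_lipschitz: "x \<in> H \<Longrightarrow> y \<in> H \<Longrightarrow> norm (g x - g y) \<le> Bg1 * norm (x - y)"
proof (rule differentiable_bound[OF H_convex])
  show "(g has_derivative g' w) (at w within H)" for w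
    using g_deriv has_derivative_at_withinI by blast
  have "onorm (g' w) \<le> onorm (adjoint (g' w))" for w
    by (rule onorm_le_onorm_adjoint[OF linear_g'])
  then show "onorm (g' w) \<le> Bg1" if "w \<in> H" for w
    using onorm_adjoint_g'_le[OF that] by (meson order_trans)
qed

lemma f_linearization_le:
  assumes "x \<in> H" "y \<in> H"
  shows "f y - f x - gf x \<bullet> (y - x) \<le> Lf * (norm (y - x))\<^sup>2"
proof -
  have "onorm ((\<lambda>d. gf w \<bullet> d) - (\<lambda>d. gf x \<bullet> d)) \<le> Lf * norm (w - x)" if "w \<in> H" for w
  proof -
    have "onorm ((\<lambda>d. gf w \<bullet> d) - (\<lambda>d. gf x \<bullet> d)) \<le> norm (gf w - gf x)"
      by (rule onorm_le) (simp add: fun_diff_def inner_diff_left[symmetric] Cauchy_Schwarz_ineq2)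
    also have "\<dots> \<le> Lf * norm (w - x)" using gf_lipschitz that assms(1) by blast
    finally show ?thesis .
  qed
  then have "norm (f y - f x - gf x \<bullet> (y - x)) \<le> Lf * (norm (y - x))\<^sup>2"
    using f_deriv Lf_nonneg
    by (intro linearization_error_le[OF H_convex assms, where F' = "\<lambda>w d. gf w \<bullet> d"])
      (auto intro: has_derivative_at_withinI)
  then show ?thesis by simp
qed

lemma g_linearization_le: "norm (g y - g x - g' x (y - x)) \<le> Lg * (norm (y - x))\<^sup>2"
proof (rule linearization_error_le[where S = UNIV])
  show "onorm (g' w - g' x) \<le> Lg * norm (w - x)" for w
    using onorm_diff_le_onorm_adjoint_diff[OF linear_g' linear_g'] adjoint_g'_lipschitz by (meson order_trans)
qed (use g_deriv Lg_nonneg in auto)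

lemma dual_gradient_ineq: "q \<in> dual_cone K \<Longrightarrow> q \<bullet> g' x (y - x) \<le> q \<bullet> g y - q \<bullet> g x"
  using K_convex_gradient_ineq[OF g_K_convex] g_deriv by blast

lemma bdd_below_phi: "bdd_below ((\<lambda>x. f x + h x) ` H)"
proof -
  have "continuous_on H f"
    using f_deriv by (intro continuous_at_imp_continuous_on) (auto intro: has_derivative_continuous)
  moreover have "continuous_on H h"
    using h_lipschitz Kh_nonneg by (intro lipschitz_on_continuous_on lipschitz_onI) (auto simp: dist_real_def)
  ultimately have "compact ((\<lambda>x. f x + h x) ` H)"
    by (intro compact_continuous_image continuous_on_add H_compact)
  then show ?thesis by (intro bounded_imp_bdd_below compact_imp_bounded)
qed

end

section \<open>Boundedness of the multipliers\<close>

lemma le_of_le_add_small_multiple: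
  fixes a b C :: real
  assumes le: "\<And>t. 0 < t \<Longrightarrow> t \<le> 1 \<Longrightarrow> a \<le> b + t * C" and "C \<ge> 0"
  shows "a \<le> b"
proof (rule ccontr)
  assume "\<not> a \<le> b"
  define t where "t = min 1 ((a - b) / (C + 1))"
  have t: "0 < t" "t \<le> 1" unfolding t_def using \<open>\<not> a \<le> b\<close> \<open>C \<ge> 0\<close> by auto
  have "t * C \<le> (a - b) / (C + 1) * C" unfolding t_def using \<open>C \<ge> 0\<close> by (intro mult_right_mono) auto
  also have "\<dots> < a - b" using \<open>\<not> a \<le> b\<close> \<open>C \<ge> 0\<close> by (simp add: field_simps)
  finally show False using le[OF t] by simp
qed

lemma linear_coeff_bound_of_quadratic_nonneg:
  fixes X L d e R s :: real
  assumes nonneg: "\<And>t. 0 < t \<Longrightarrow> t \<le> 1 \<Longrightarrow> 0 \<le> t * X + t\<^sup>2 * (L * d\<^sup>2) + e"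
    and "L \<ge> 1" "d \<ge> 0" "R \<ge> 0" "e \<ge> 0" and eL: "2 * e * L \<le> s * R\<^sup>2" and "s \<le> 1/2" "0 \<le> s"
  shows "- X \<le> R * d + s * R\<^sup>2 / 2"
proof -
  have "2 * e \<le> 2 * e * L" using \<open>e \<ge> 0\<close> \<open>L \<ge> 1\<close> by (simp add: mult_le_cancel_left1)
  then have e: "e \<le> s * R\<^sup>2 / 2" using eL by simp
  consider "L * d\<^sup>2 \<le> R * d / 2" | "R = 0" | "R > 0" "L * d\<^sup>2 > R * d / 2"
    using \<open>R \<ge> 0\<close> by fastforce
  then show ?thesis
  proof cases
    case 1
    moreover have "0 \<le> R * d" using \<open>R \<ge> 0\<close> \<open>d \<ge> 0\<close> by simp
    ultimately show ?thesis using nonneg[of 1] e by simp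
  next
    case 2
    \<comment> \<open>then e = 0, and letting t tend to 0 in X + t L d^2 \<ge> 0 gives X \<ge> 0\<close>
    have "e = 0" using e \<open>e \<ge> 0\<close> 2 by simp
    have "- X \<le> 0 + t * (L * d\<^sup>2)" if "0 < t" "t \<le> 1" for t
    proof -
      have "0 \<le> t * (X + t * (L * d\<^sup>2))"
        using nonneg[OF that] \<open>e = 0\<close> by (simp add: power2_eq_square algebra_simps)
      then show ?thesis using \<open>0 < t\<close> by (simp add: zero_le_mult_iff)
    qed
    then have "- X \<le> 0"
      by (rule le_of_le_add_small_multiple) (use \<open>L \<ge> 1\<close> in \<open>auto intro: mult_nonneg_nonneg\<close>)
    then show ?thesis using 2 by simp
  next
    case 3
    then have "d > 0" using \<open>d \<ge> 0\<close> by (cases "d = 0") auto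
    define t where "t = R / (2 * L * d)"
    have t: "0 < t" "t \<le> 1"
      using 3 \<open>d > 0\<close> \<open>L \<ge> 1\<close> unfolding t_def by (auto simp: field_simps power2_eq_square)
    have "t * (X + t * (L * d\<^sup>2) + e / t) = t * X + t\<^sup>2 * (L * d\<^sup>2) + e"
      using t by (simp add: field_simps power2_eq_square)
    then have "0 \<le> t * (X + t * (L * d\<^sup>2) + e / t)" using nonneg[OF t] by simp
    then have "- X \<le> t * (L * d\<^sup>2) + e / t" using t by (simp add: zero_le_mult_iff)
    moreover have "t * (L * d\<^sup>2) = R * d / 2"
      unfolding t_def using \<open>L \<ge> 1\<close> \<open>d > 0\<close> by (simp add: field_simps power2_eq_square)
    moreover have "e / t \<le> s * R * d"
    proof -
      have "e / t = (2 * e * L) * d / R" unfolding t_def using 3 \<open>L \<ge> 1\<close> \<open>d > 0\<close> by (simp add: field_simps)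
      also have "\<dots> \<le> (s * R\<^sup>2) * d / R" using eL \<open>d > 0\<close> 3 by (simp add: divide_right_mono mult_right_mono)
      finally show ?thesis using 3 by (simp add: power2_eq_square)
    qed
    moreover have "s * R * d \<le> R * d / 2" using \<open>s \<le> 1/2\<close> 3 \<open>d > 0\<close> by simp
    moreover have "0 \<le> s * R\<^sup>2 / 2" using \<open>0 \<le> s\<close> by simp
    ultimately show ?thesis by linarith
  qed
qed

context iapial_problem
begin

lemma exists_descent_direction:
  assumes "z \<in> H" and q: "q \<in> dual_cone K" and "q \<bullet> g z \<ge> 0"
  shows "\<exists>y\<in>H. q \<bullet> g' z (y - z) \<le> - (min 1 dbar * tau * norm q)"
proof -
  let ?m = "min 1 dbar"
  have m: "0 < ?m" "?m \<le> 1" using dbar_pos by auto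
  have "q \<bullet> g zbar \<le> 0" using q zbar_feasible unfolding dual_cone_def by force
  moreover have gz: "q \<bullet> g' z (zbar - z) \<le> q \<bullet> g zbar - q \<bullet> g z" by (rule dual_gradient_ineq[OF q])
  moreover have "max (norm (adjoint (g' z) q)) \<bar>q \<bullet> g zbar\<bar> \<ge> tau * norm q"
    using regularity \<open>z \<in> H\<close> q by blast
  ultimately consider "norm (adjoint (g' z) q) \<ge> tau * norm q" | "q \<bullet> g zbar \<le> - (tau * norm q)"
    by (fastforce simp: max_def split: if_splits)
  then show ?thesis
  proof cases
    case 1
    \<comment> \<open>move from zbar a distance min 1 dbar against the gradient direction, staying in H\<close>
    define a where "a = adjoint (g' z) q"
    show ?thesis
    proof (cases "a = 0")
      case True
      then have "q = 0" using 1 tau_pos unfolding a_def by (simp add: mult_le_0_iff)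
      then show ?thesis using zbar_in_H by auto
    next
      case False
      define y where "y = zbar - (?m / norm a) *\<^sub>R a"
      have "y \<in> H" using m False by (intro mem_H_if_near_zbar) (simp add: y_def)
      have "y - z = (zbar - z) - (?m / norm a) *\<^sub>R a" by (simp add: y_def algebra_simps)
      then have "q \<bullet> g' z (y - z) = q \<bullet> g' z (zbar - z) - (?m / norm a) * (g' z a \<bullet> q)"
        by (simp add: linear_diff[OF linear_g'] linear_scale[OF linear_g'] inner_diff_right inner_commute)
      also have "g' z a \<bullet> q = (norm a)\<^sup>2"
        using adjoint_works[OF linear_g'[of z], of a q] by (simp add: a_def power2_norm_eq_inner)
      finally have "q \<bullet> g' z (y - z) = q \<bullet> g' z (zbar - z) - ?m * norm a"
        using False by (simp add: power2_eq_square)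
      moreover have "?m * (tau * norm q) \<le> ?m * norm a" using 1 m unfolding a_def by simp
      ultimately show ?thesis
        using \<open>y \<in> H\<close> gz \<open>q \<bullet> g z \<ge> 0\<close> \<open>q \<bullet> g zbar \<le> 0\<close> by (intro bexI[of _ y]) (simp_all add: mult.assoc)
    qed
  next
    case 2
    have "?m * (tau * norm q) \<le> tau * norm q" using m tau_pos by (simp add: mult_left_le_one_le)
    then show ?thesis using 2 gz \<open>q \<bullet> g z \<ge> 0\<close> zbar_in_H by (intro bexI[of _ zbar]) (simp_all add: mult.assoc)
  qed
qed

lemma augL_segment_increment_le:
  assumes "c > 0" "z \<in> H" "y \<in> H" "0 \<le> t" "t \<le> 1" and q: "q = projK K (p + c *\<^sub>R g z)"
  shows "augL K f h g c (z + t *\<^sub>R (y - z)) p - augL K f h g c z p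
    \<le> t * ((Bf1 + Kh) * norm (y - z) + q \<bullet> g' z (y - z))
      + t\<^sup>2 * ((Lf + norm q * Lg + c * Bg1\<^sup>2) * (norm (y - z))\<^sup>2)"
proof -
  define z' where "z' = z + t *\<^sub>R (y - z)"
  define n where "n = norm (y - z)"
  have z'_eq: "z' = (1 - t) *\<^sub>R z + t *\<^sub>R y" unfolding z'_def by (simp add: algebra_simps)
  have "z' \<in> H" unfolding z'_eq using convexD[OF H_convex \<open>z \<in> H\<close> \<open>y \<in> H\<close>] assms(4,5) by simp
  have step: "z' - z = t *\<^sub>R (y - z)" unfolding z'_def by simp
  have nstep: "norm (z' - z) = t * n" unfolding step n_def using \<open>0 \<le> t\<close> by simp
  have f_inc: "f z' - f z \<le> t * (Bf1 * n) + t\<^sup>2 * (Lf * n\<^sup>2)"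
  proof -
    have "gf z \<bullet> (y - z) \<le> Bf1 * n"
      using norm_cauchy_schwarz[of "gf z" "y - z"] norm_gf_le[OF \<open>z \<in> H\<close>] unfolding n_def
      by (meson mult_right_mono norm_ge_zero order_trans)
    then have "t * (gf z \<bullet> (y - z)) \<le> t * (Bf1 * n)" using \<open>0 \<le> t\<close> by (rule mult_left_mono)
    moreover have "gf z \<bullet> (z' - z) = t * (gf z \<bullet> (y - z))" unfolding step by simp
    moreover have "Lf * (norm (z' - z))\<^sup>2 = t\<^sup>2 * (Lf * n\<^sup>2)" unfolding nstep by (simp add: power_mult_distrib)
    ultimately show ?thesis using f_linearization_le[OF \<open>z \<in> H\<close> \<open>z' \<in> H\<close>] by linarith
  qed
  have h_inc: "h z' - h z \<le> t * (Kh * n)"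
  proof -
    have "h z' \<le> (1 - t) * h z + t * h y"
      unfolding z'_eq using convex_onD[OF h_convex, of t z y] assms by simp
    moreover have "h y - h z \<le> Kh * n"
      using h_lipschitz \<open>y \<in> H\<close> \<open>z \<in> H\<close> unfolding n_def by (force simp: dist_norm)
    then have "t * (h y - h z) \<le> t * (Kh * n)" using \<open>0 \<le> t\<close> by (rule mult_left_mono)
    moreover have "(1 - t) * h z + t * h y = h z + t * (h y - h z)" by (simp add: algebra_simps)
    ultimately show ?thesis by linarith
  qed
  have g_inc: "q \<bullet> (g z' - g z) \<le> t * (q \<bullet> g' z (y - z)) + t\<^sup>2 * (norm q * Lg * n\<^sup>2)"
  proof -
    have "q \<bullet> (g z' - g z - g' z (z' - z)) \<le> norm q * (Lg * (norm (z' - z))\<^sup>2)"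
      using norm_cauchy_schwarz[of q] g_linearization_le[of z' z]
      by (meson mult_left_mono norm_ge_zero order_trans)
    moreover have "q \<bullet> (g z' - g z - g' z (z' - z)) = q \<bullet> (g z' - g z) - t * (q \<bullet> g' z (y - z))"
      unfolding step linear_scale[OF linear_g'] by (simp add: inner_diff_right)
    moreover have "norm q * (Lg * (norm (z' - z))\<^sup>2) = t\<^sup>2 * (norm q * Lg * n\<^sup>2)"
      unfolding nstep by (simp add: power_mult_distrib)
    ultimately show ?thesis by linarith
  qed
  have penalty_inc: "c / 2 * (norm (g z' - g z))\<^sup>2 \<le> t\<^sup>2 * (c * Bg1\<^sup>2 * n\<^sup>2)"
  proof -
    have "norm (g z' - g z) \<le> Bg1 * (t * n)"
      using g_lipschitz[OF \<open>z' \<in> H\<close> \<open>z \<in> H\<close>] unfolding nstep .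
    then have "(norm (g z' - g z))\<^sup>2 \<le> (Bg1 * (t * n))\<^sup>2" by (rule power_mono) simp
    then have "c / 2 * (norm (g z' - g z))\<^sup>2 \<le> c / 2 * (t\<^sup>2 * (Bg1\<^sup>2 * n\<^sup>2))"
      using \<open>c > 0\<close> by (simp add: power_mult_distrib mult.left_commute)
    also have "\<dots> \<le> t\<^sup>2 * (c * Bg1\<^sup>2 * n\<^sup>2)" using \<open>c > 0\<close> by simp
    finally show ?thesis .
  qed
  have "t * ((Bf1 + Kh) * n + q \<bullet> g' z (y - z)) + t\<^sup>2 * ((Lf + norm q * Lg + c * Bg1\<^sup>2) * n\<^sup>2)
      = t * (Bf1 * n) + t\<^sup>2 * (Lf * n\<^sup>2) + t * (Kh * n) + (t * (q \<bullet> g' z (y - z)) + t\<^sup>2 * (norm q * Lg * n\<^sup>2))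
        + t\<^sup>2 * (c * Bg1\<^sup>2 * n\<^sup>2)"
    by (simp add: algebra_simps)
  then show ?thesis
    using augL_increment_le[where g = g and z = z and z' = z' and f = f and h = h, OF \<open>c > 0\<close> q] f_inc h_inc g_inc penalty_inc
    unfolding z'_def n_def by linarith
qed

lemma inexact_prox_model_nonneg:
  assumes sub: "v \<in> eps_subdiff H (\<lambda>u. lam * augL K f h g c u p + 1 / 2 * (norm (u - z0))\<^sup>2) e z"
    and "c > 0" "lam > 0" "z \<in> H" "y \<in> H" "0 \<le> t" "t \<le> 1" and q: "q = projK K (p + c *\<^sub>R g z)"
  shows "0 \<le> t * (lam * ((Bf1 + Kh) * norm (y - z) + q \<bullet> g' z (y - z)) + norm (v + z0 - z) * norm (y - z))
      + t\<^sup>2 * ((lam * (Lf + norm q * Lg + c * Bg1\<^sup>2) + 1) * (norm (y - z))\<^sup>2) + e"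
proof -
  define z' where "z' = z + t *\<^sub>R (y - z)"
  define P where "P = (Bf1 + Kh) * norm (y - z) + q \<bullet> g' z (y - z)"
  define Q where "Q = (Lf + norm q * Lg + c * Bg1\<^sup>2) * (norm (y - z))\<^sup>2"
  have "z' = (1 - t) *\<^sub>R z + t *\<^sub>R y" unfolding z'_def by (simp add: algebra_simps)
  then have "z' \<in> H" using convexD[OF H_convex \<open>z \<in> H\<close> \<open>y \<in> H\<close>] assms(6,7) by simp
  then have sg: "lam * augL K f h g c z p + 1 / 2 * (norm (z - z0))\<^sup>2 + t * (v \<bullet> (y - z)) - e
      \<le> lam * augL K f h g c z' p + 1 / 2 * (norm (z' - z0))\<^sup>2"
    using sub unfolding eps_subdiff_def z'_def by force
  have "lam * (augL K f h g c z' p - augL K f h g c z p) \<le> lam * (t * P + t\<^sup>2 * Q)"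
    using augL_segment_increment_le[OF \<open>c > 0\<close> \<open>z \<in> H\<close> \<open>y \<in> H\<close> assms(6,7) q] \<open>lam > 0\<close>
    unfolding z'_def P_def Q_def by simp
  moreover have "(norm (z' - z0))\<^sup>2 = (norm (z - z0))\<^sup>2 + 2 * t * ((z - z0) \<bullet> (y - z)) + t\<^sup>2 * (norm (y - z))\<^sup>2"
    using power2_norm_add_scaleR[of "z - z0" t "y - z"] unfolding z'_def by (simp add: algebra_simps)
  moreover have "t * ((z - z0) \<bullet> (y - z) - v \<bullet> (y - z)) \<le> t * (norm (v + z0 - z) * norm (y - z))"
  proof -
    have "(z - z0) \<bullet> (y - z) - v \<bullet> (y - z) = - ((v + z0 - z) \<bullet> (y - z))"
      by (simp add: inner_diff_left inner_add_left)
    also have "\<dots> \<le> norm (v + z0 - z) * norm (y - z)"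
      using norm_cauchy_schwarz[of "- (v + z0 - z)" "y - z"] by (simp only: norm_minus_cancel inner_minus_left)
    finally show ?thesis using \<open>0 \<le> t\<close> by (rule mult_left_mono)
  qed
  moreover have "t\<^sup>2 * (norm (y - z))\<^sup>2 / 2 \<le> t\<^sup>2 * (norm (y - z))\<^sup>2" by simp
  moreover have "t * (lam * P + norm (v + z0 - z) * norm (y - z)) + t\<^sup>2 * ((lam * (Lf + norm q * Lg + c * Bg1\<^sup>2) + 1) * (norm (y - z))\<^sup>2)
      = lam * (t * P + t\<^sup>2 * Q) + t * (norm (v + z0 - z) * norm (y - z)) + t\<^sup>2 * (norm (y - z))\<^sup>2"
    unfolding Q_def by (simp add: algebra_simps)
  moreover have "t * ((z - z0) \<bullet> (y - z) - v \<bullet> (y - z)) = t * ((z - z0) \<bullet> (y - z)) - t * (v \<bullet> (y - z))"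
    by (simp add: algebra_simps)
  moreover have "lam * (augL K f h g c z' p - augL K f h g c z p) = lam * augL K f h g c z' p - lam * augL K f h g c z p"
    by (simp add: algebra_simps)
  ultimately show ?thesis using sg unfolding P_def[symmetric] by linarith
qed

lemma prox_weight_ge_1: "0 \<le> lam \<Longrightarrow> 0 \<le> c \<Longrightarrow> 1 \<le> lam * (Lf + Lg * norm p + c * (Bg0 * Lg + Bg1\<^sup>2)) + 1"
  using Lf_nonneg Lg_nonneg Bg0_nonneg by simp

lemma multiplier_growth_le:
  assumes sub: "v \<in> eps_subdiff H (\<lambda>u. lam * augL K f h g c u p + 1 / 2 * (norm (u - z0))\<^sup>2) e z"
    and "e \<ge> 0" and err: "(norm v)\<^sup>2 + 2 * e \<le> \<sigma>\<^sup>2 / Lp * (norm (v + z0 - z))\<^sup>2"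
    and Lp: "Lp = lam * (Lf + Lg * norm p + c * (Bg0 * Lg + Bg1\<^sup>2)) + 1"
    and "\<sigma>\<^sup>2 \<le> 1/2" "c > 0" "lam > 0" "z \<in> H" "y \<in> H" and q: "q = projK K (p + c *\<^sub>R g z)"
    and descent: "q \<bullet> g' z (y - z) \<le> - (m * norm q)"
  shows "lam * (m * norm q)
    \<le> lam * (Bf1 + Kh) * norm (y - z) + 2 * (norm (v + z0 - z) * norm (y - z)) + \<sigma>\<^sup>2 * (norm (v + z0 - z))\<^sup>2 / 2"
proof -
  define n r where "n = norm (y - z)" and "r = norm (v + z0 - z)"
  define X where "X = lam * ((Bf1 + Kh) * n - m * norm q) + r * n"
  have "Lp \<ge> 1" unfolding Lp using \<open>lam > 0\<close> \<open>c > 0\<close> by (intro prox_weight_ge_1) auto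
  have "c * norm (g z) \<le> c * Bg0" using norm_g_le[OF \<open>z \<in> H\<close>] \<open>c > 0\<close> by simp
  moreover have "norm (p + c *\<^sub>R g z) \<le> norm p + c * norm (g z)"
    using norm_triangle_ineq[of p "c *\<^sub>R g z"] \<open>c > 0\<close> by simp
  ultimately have "norm q \<le> norm p + c * Bg0" using norm_projK_le[of "p + c *\<^sub>R g z"] unfolding q by linarith
  then have "norm q * Lg \<le> (norm p + c * Bg0) * Lg" using Lg_nonneg by (rule mult_right_mono)
  then have "lam * (norm q * Lg) \<le> lam * ((norm p + c * Bg0) * Lg)"
    using \<open>lam > 0\<close> by (rule mult_left_mono[OF _ less_imp_le])
  then have "lam * (Lf + norm q * Lg + c * Bg1\<^sup>2) + 1 \<le> Lp"
    using Lp by (simp add: algebra_simps)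
  then have coef: "(lam * (Lf + norm q * Lg + c * Bg1\<^sup>2) + 1) * n\<^sup>2 \<le> Lp * n\<^sup>2" by (simp add: mult_right_mono)
  have "lam * (q \<bullet> g' z (y - z)) \<le> lam * (- (m * norm q))"
    using descent \<open>lam > 0\<close> by (rule mult_left_mono[OF _ less_imp_le])
  then have slope: "lam * ((Bf1 + Kh) * n + q \<bullet> g' z (y - z)) + r * n \<le> X"
    unfolding X_def by (simp add: algebra_simps)
  have "0 \<le> t * X + t\<^sup>2 * (Lp * n\<^sup>2) + e" if "0 < t" "t \<le> 1" for t
  proof -
    have "t * (lam * ((Bf1 + Kh) * n + q \<bullet> g' z (y - z)) + r * n) \<le> t * X"
      using slope \<open>0 < t\<close> by (simp add: mult_left_mono)
    moreover have "t\<^sup>2 * ((lam * (Lf + norm q * Lg + c * Bg1\<^sup>2) + 1) * n\<^sup>2) \<le> t\<^sup>2 * (Lp * n\<^sup>2)"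
      using coef by (simp add: mult_left_mono)
    ultimately show ?thesis
      using inexact_prox_model_nonneg[OF sub \<open>c > 0\<close> \<open>lam > 0\<close> \<open>z \<in> H\<close> \<open>y \<in> H\<close> _ \<open>t \<le> 1\<close> q] \<open>0 < t\<close>
      unfolding n_def r_def by linarith
  qed
  moreover have "2 * e * Lp \<le> \<sigma>\<^sup>2 * r\<^sup>2"
  proof -
    have "Lp * (e * 2) + Lp * (norm v)\<^sup>2 \<le> \<sigma>\<^sup>2 * r\<^sup>2"
      using err \<open>Lp \<ge> 1\<close> unfolding r_def by (simp add: field_simps)
    moreover have "Lp * (norm v)\<^sup>2 \<ge> 0" using \<open>Lp \<ge> 1\<close> by simp
    ultimately show ?thesis by (simp add: mult.commute mult.left_commute)
  qed
  ultimately have "- X \<le> r * n + \<sigma>\<^sup>2 * r\<^sup>2 / 2"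
    using \<open>Lp \<ge> 1\<close> \<open>e \<ge> 0\<close> \<open>\<sigma>\<^sup>2 \<le> 1/2\<close>
    by (intro linear_coeff_bound_of_quadratic_nonneg) (auto simp: n_def r_def)
  then show ?thesis unfolding X_def n_def r_def by (simp add: algebra_simps)
qed

lemma norm_multiplier_update_le:
  assumes sub: "v \<in> eps_subdiff H (\<lambda>u. lam * augL K f h g c u p + 1 / 2 * (norm (u - z0))\<^sup>2) e z"
    and "e \<ge> 0" and err: "(norm v)\<^sup>2 + 2 * e \<le> \<sigma>\<^sup>2 / Lp * (norm (v + z0 - z))\<^sup>2"
    and Lp: "Lp = lam * (Lf + Lg * norm p + c * (Bg0 * Lg + Bg1\<^sup>2)) + 1"
    and "0 < \<sigma>" "\<sigma>\<^sup>2 \<le> 1/2" "c > 0" "lam > 0" "z0 \<in> H" "z \<in> H"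
  shows "norm (projK K (p + c *\<^sub>R g z)) \<le> max (norm p)
    ((2 * (Kh + Bf1) * Dh + (\<sigma>\<^sup>2 / (2 * (1 - \<sigma>)\<^sup>2) + 2 * ((1 + \<sigma>) / (1 - \<sigma>))) * Dh\<^sup>2 / lam)
      / (min 1 dbar * tau))"
    (is "norm ?q \<le> max (norm p) (?\<kappa> / ?m)")
proof (cases "norm ?q \<le> norm p")
  case False
  have "?m > 0" using dbar_pos tau_pos by simp
  have "\<sigma> < 1" using \<open>\<sigma>\<^sup>2 \<le> 1/2\<close> power2_less_imp_less[of \<sigma> 1] by simp
  have "?q \<bullet> g z \<ge> 0" using inner_projK_nonneg_if_norm_grows[OF \<open>c > 0\<close>] False by simp
  then obtain y where "y \<in> H" and descent: "?q \<bullet> g' z (y - z) \<le> - (?m * norm ?q)"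
    using exists_descent_direction[OF \<open>z \<in> H\<close> projK_in_dual_cone] by (auto simp: mult.assoc)
  define n r W where "n = norm (y - z)" and "r = norm (v + z0 - z)" and "W = Dh / (1 - \<sigma>)"
  have "Lp \<ge> 1" unfolding Lp using \<open>lam > 0\<close> \<open>c > 0\<close> by (intro prox_weight_ge_1) auto
  then have "\<sigma>\<^sup>2 / Lp \<le> \<sigma>\<^sup>2 / 1" by (intro divide_left_mono) auto
  then have "r \<le> W" unfolding r_def W_def
    using norm_prox_residual_le[OF err _ _ \<open>\<sigma> < 1\<close> \<open>e \<ge> 0\<close> norm_diff_le_Dh[OF \<open>z0 \<in> H\<close> \<open>z \<in> H\<close>]] \<open>0 < \<sigma>\<close>
    by simp
  have "0 \<le> W" unfolding W_def using \<open>\<sigma> < 1\<close> Dh_nonneg by simp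
  have "n \<le> Dh" unfolding n_def by (rule norm_diff_le_Dh[OF \<open>y \<in> H\<close> \<open>z \<in> H\<close>])
  have "lam * (?m * norm ?q) \<le> lam * (Bf1 + Kh) * n + 2 * (r * n) + \<sigma>\<^sup>2 * r\<^sup>2 / 2"
    using multiplier_growth_le[OF sub \<open>e \<ge> 0\<close> err Lp \<open>\<sigma>\<^sup>2 \<le> 1/2\<close> \<open>c > 0\<close> \<open>lam > 0\<close> \<open>z \<in> H\<close> \<open>y \<in> H\<close> refl descent]
    unfolding n_def r_def .
  also have "\<dots> \<le> lam * (Bf1 + Kh) * Dh + 2 * (W * Dh) + \<sigma>\<^sup>2 * W\<^sup>2 / 2"
    using \<open>n \<le> Dh\<close> \<open>r \<le> W\<close> \<open>0 \<le> W\<close> \<open>lam > 0\<close> Bf1_nonneg Kh_nonneg Dh_nonneg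
    by (intro add_mono mult_left_mono mult_mono power_mono divide_right_mono) (auto simp: n_def r_def)
  also have "\<dots> \<le> lam * ?\<kappa>"
  proof -
    have "0 \<le> W * Dh" using \<open>0 \<le> W\<close> Dh_nonneg by simp
    then have "2 * (W * Dh) \<le> 2 * (1 + \<sigma>) * (W * Dh)" using \<open>0 < \<sigma>\<close> by (simp add: mult_right_mono)
    moreover have "0 \<le> lam * (Bf1 + Kh) * Dh" using \<open>lam > 0\<close> Bf1_nonneg Kh_nonneg Dh_nonneg by simp
    moreover have "lam * ?\<kappa> = 2 * (lam * (Bf1 + Kh) * Dh) + \<sigma>\<^sup>2 * W\<^sup>2 / 2 + 2 * (1 + \<sigma>) * (W * Dh)"
      unfolding W_def using \<open>lam > 0\<close> \<open>\<sigma> < 1\<close> by (simp add: field_simps power2_eq_square)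
    ultimately show ?thesis by linarith
  qed
  finally have "?m * norm ?q \<le> ?\<kappa>" using \<open>lam > 0\<close> by simp
  then have "norm ?q \<le> ?\<kappa> / ?m" using \<open>?m > 0\<close> by (simp only: pos_le_divide_eq mult.commute)
  then show ?thesis by simp
qed simp

end

section \<open>The penalty parameters\<close>

locale doubling_sequence =
  fixes c :: "nat \<Rightarrow> real" and N :: nat
  assumes c1_pos: "c 1 > 0"
    and c_step: "\<And>j. j \<in> {1..N} \<Longrightarrow> c (j + 1) = c j \<or> c (j + 1) = 2 * c j"
begin

lemma c_power: "1 \<le> j \<Longrightarrow> j \<le> N + 1 \<Longrightarrow> \<exists>m. c j = 2 ^ m * c 1"
proof (induction j rule: nat_induct_at_least)
  case (Suc j)
  then obtain m where "c j = 2 ^ m * c 1" by auto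
  then show ?case using c_step[of j] Suc.prems Suc.hyps by (auto intro: exI[of _ "Suc m"])
qed (auto intro: exI[of _ 0])

lemma c_pos: "1 \<le> j \<Longrightarrow> j \<le> N + 1 \<Longrightarrow> c j > 0"
  using c_power c1_pos by fastforce

lemma c_mono: "i \<le> j \<Longrightarrow> 1 \<le> i \<Longrightarrow> j \<le> N + 1 \<Longrightarrow> c i \<le> c j"
proof (induction j rule: dec_induct)
  case (step j)
  then show ?case using c_step[of j] c_pos[of j] by auto
qed simp

lemma c_attains_smaller_powers:
  "1 \<le> k \<Longrightarrow> k \<le> N + 1 \<Longrightarrow> c k = 2 ^ M * c 1 \<Longrightarrow> m \<le> M \<Longrightarrow> \<exists>j\<in>{1..k}. c j = 2 ^ m * c 1"
proof (induction k arbitrary: M rule: nat_induct_at_least)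
  case base
  then have "M = 0" using c1_pos power_inject_exp[of "2::real" M 0] by simp
  then show ?case using base by (auto intro: bexI[of _ 1])
next
  case (Suc k)
  obtain M' where M': "c k = 2 ^ M' * c 1" using c_power[of k] Suc.prems(1) Suc.hyps by auto
  consider "c (Suc k) = c k" | "c (Suc k) = 2 * c k" using c_step[of k] Suc.prems(1) Suc.hyps by auto
  then show ?case
  proof cases
    case 1
    then have "c k = 2 ^ M * c 1" using Suc.prems(2) by simp
    then obtain j where "j \<in> {1..k}" "c j = 2 ^ m * c 1" using Suc.IH[of M] Suc.prems(1,3) by auto
    then show ?thesis by (auto intro: bexI[of _ j])
  next
    case 2
    then have "(2::real) ^ M = 2 ^ Suc M'" using Suc.prems(2) M' c1_pos by simp
    then have "M = Suc M'" using power_inject_exp[of "2::real" M "Suc M'"] by (simp del: power_Suc)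
    show ?thesis
    proof (cases "m = M")
      case True
      then show ?thesis using Suc.prems(2) by (auto intro: bexI[of _ "Suc k"])
    next
      case False
      then obtain j where "j \<in> {1..k}" "c j = 2 ^ m * c 1"
        using Suc.IH[of M'] Suc.prems M' \<open>M = Suc M'\<close> by auto
      then show ?thesis by (auto intro: bexI[of _ j])
    qed
  qed
qed

lemma c_const_on_cycle:
  assumes "l \<ge> 1" "k \<in> {1..N}" "c k = 2 ^ (l - 1) * c 1"
    and kprev: "kprev = (if l = 1 then 0 else Max {j\<in>{1..N}. c j = 2 ^ (l - 2) * c 1})"
    and "j \<in> {kprev + 1..k}"
  shows "c j = 2 ^ (l - 1) * c 1"
proof (cases "l = 1")
  case True
  then show ?thesis using c_mono[of 1 j] c_mono[of j k] assms by auto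
next
  case False
  define S where "S = {j\<in>{1..N}. c j = 2 ^ (l - 2) * c 1}"
  have pow: "(2::real) ^ (l - 1) = 2 * 2 ^ (l - 2)" using False \<open>l \<ge> 1\<close> by (simp flip: power_Suc)
  obtain J where "J \<in> {1..k}" "c J = 2 ^ (l - 2) * c 1"
    using c_attains_smaller_powers[of k "l - 1" "l - 2"] assms(2,3) by fastforce
  then have "S \<noteq> {}" using assms(2) unfolding S_def by (auto intro!: exI[of _ J])
  then have "kprev \<in> S" using False kprev Max_in[of S] unfolding S_def by simp
  then have kprev_pos: "1 \<le> kprev" "kprev \<le> N" and c_kprev: "c kprev = 2 ^ (l - 2) * c 1"
    unfolding S_def by auto
  have "kprev < k"
  proof (rule ccontr)
    assume "\<not> kprev < k"
    then have "c k \<le> c kprev" using c_mono[of k kprev] assms(2) kprev_pos by auto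
    then show False using assms(3) c_kprev pow c1_pos by simp
  qed
  have "kprev + 1 \<notin> S"
  proof
    assume "kprev + 1 \<in> S"
    then have "kprev + 1 \<le> Max S" by (intro Max_ge) (simp_all add: S_def)
    then show False using False kprev unfolding S_def by simp
  qed
  then have "c (kprev + 1) = 2 ^ (l - 1) * c 1"
    using c_step[of kprev] kprev_pos \<open>kprev < k\<close> assms(2) c_kprev pow unfolding S_def by auto
  moreover have "c (kprev + 1) \<le> c j" "c j \<le> c k" using c_mono assms(2,5) by auto
  ultimately show ?thesis using assms(3) by simp
qed

end

section \<open>Descent within a cycle\<close>

text \<open>The first N iterations of NL-IAPIAL: the inexact proximal step (1), the multiplier update (3)
and the update of c in step (4), reduced to its only consequence used here.\<close>

locale nl_iapial =
  iapial_problem K H h f gf g g' Kh Lf Lg tau zbar Dh Bf1 Bg0 Bg1 dbar + doubling_sequence c N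
  for K H h f gf g g' Kh Lf Lg tau zbar Dh Bf1 Bg0 Bg1 dbar c N +
  fixes lam \<sigma> :: real and z v :: "nat \<Rightarrow> 'a::euclidean_space" and eps :: "nat \<Rightarrow> real"
    and p :: "nat \<Rightarrow> 'b::euclidean_space" and Lpsi :: "nat \<Rightarrow> real" and r :: "nat \<Rightarrow> 'a"
    and kappa0 C0 :: real
  assumes lam_pos: "0 < lam" and sigma_pos: "0 < \<sigma>" and sigma_sq_le: "\<sigma>\<^sup>2 \<le> 1/2"
    and z0_in_H: "z 0 \<in> H"
    and Lpsi_eq: "Lpsi = (\<lambda>j. lam * (Lf + Lg * norm (p (j - 1)) + c j * (Bg0 * Lg + Bg1\<^sup>2)) + 1)"
    and r_eq: "r = (\<lambda>j. v j + z (j - 1) - z j)"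
    and prox_step: "\<forall>j\<in>{1..N}. v j \<in> eps_subdiff H
          (\<lambda>u. lam * augL K f h g (c j) u (p (j - 1)) + 1 / 2 * (norm (u - z (j - 1)))\<^sup>2) (eps j) (z j)"
    and eps_nonneg: "\<forall>j\<in>{1..N}. eps j \<ge> 0"
    and prox_err: "\<forall>j\<in>{1..N}. (norm (v j))\<^sup>2 + 2 * eps j \<le> (\<sigma> / sqrt (Lpsi j))\<^sup>2 * (norm (r j))\<^sup>2"
    and multiplier_step: "\<forall>j\<in>{1..N}. p j = projK K (p (j - 1) + c j *\<^sub>R g (z j))"
    and kappa0_eq: "kappa0 = 2 * (Kh + Bf1) * Dh
        + (\<sigma>\<^sup>2 / (2 * (1 - \<sigma>)\<^sup>2) + 2 * ((1 + \<sigma>) / (1 - \<sigma>))) * Dh\<^sup>2 / lam"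
    and C0_eq: "C0 = max (norm (p 0)) kappa0 / (min 1 dbar * tau)"
begin

lemma z_in_H: "j \<le> N \<Longrightarrow> z j \<in> H"
  using z0_in_H prox_step unfolding eps_subdiff_def by (cases "j = 0") auto

lemma Lpsi_ge_1: "j \<in> {1..N} \<Longrightarrow> 1 \<le> Lpsi j"
  unfolding Lpsi_eq using lam_pos c_pos[of j] by (intro prox_weight_ge_1) auto

lemma prox_err_Lpsi:
  assumes "j \<in> {1..N}"
  shows "(norm (v j))\<^sup>2 + 2 * eps j \<le> \<sigma>\<^sup>2 / Lpsi j * (norm (v j + z (j - 1) - z j))\<^sup>2"
proof -
  have "(\<sigma> / sqrt (Lpsi j))\<^sup>2 = \<sigma>\<^sup>2 / Lpsi j" using Lpsi_ge_1[OF assms] by (simp add: power_divide)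
  then show ?thesis using bspec[OF prox_err assms] by (simp add: r_eq)
qed

lemma C0_bounds: "norm (p 0) \<le> C0" "kappa0 / (min 1 dbar * tau) \<le> C0"
proof -
  define M where "M = max (norm (p 0)) kappa0"
  have m: "0 < min 1 dbar * tau" "min 1 dbar * tau \<le> 1"
    using dbar_pos tau_pos tau_le_1 by (auto simp: mult_le_one)
  have "norm (p 0) \<le> M" unfolding M_def by simp
  also have "M \<le> M / (min 1 dbar * tau)"
  proof -
    have "0 \<le> M" unfolding M_def by (simp add: le_max_iff_disj)
    then have "M * (min 1 dbar * tau) \<le> M" using m by (intro mult_right_le_one_le) auto
    then show ?thesis using m by (simp add: le_divide_eq)
  qed
  finally show "norm (p 0) \<le> C0" unfolding C0_eq M_def .
  show "kappa0 / (min 1 dbar * tau) \<le> C0" unfolding C0_eq using m by (simp add: divide_right_mono)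
qed

lemma norm_p_step_le:
  assumes j: "Suc j \<in> {1..N}"
  shows "norm (p (Suc j)) \<le> max (norm (p j)) (kappa0 / (min 1 dbar * tau))"
proof -
  have sub: "v (Suc j) \<in> eps_subdiff H
      (\<lambda>u. lam * augL K f h g (c (Suc j)) u (p j) + 1 / 2 * (norm (u - z j))\<^sup>2) (eps (Suc j)) (z (Suc j))"
    using bspec[OF prox_step j] by simp
  have err: "(norm (v (Suc j)))\<^sup>2 + 2 * eps (Suc j) \<le> \<sigma>\<^sup>2 / Lpsi (Suc j) * (norm (v (Suc j) + z j - z (Suc j)))\<^sup>2"
    using prox_err_Lpsi[OF j] by simp
  have Lp: "Lpsi (Suc j) = lam * (Lf + Lg * norm (p j) + c (Suc j) * (Bg0 * Lg + Bg1\<^sup>2)) + 1"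
    unfolding Lpsi_eq by simp
  have "c (Suc j) > 0" using c_pos[of "Suc j"] j by simp
  have "z j \<in> H" "z (Suc j) \<in> H" using z_in_H j by auto
  have "p (Suc j) = projK K (p j + c (Suc j) *\<^sub>R g (z (Suc j)))" using bspec[OF multiplier_step j] by simp
  then show ?thesis
    using norm_multiplier_update_le[OF sub bspec[OF eps_nonneg j] err Lp sigma_pos sigma_sq_le
        \<open>c (Suc j) > 0\<close> lam_pos \<open>z j \<in> H\<close> \<open>z (Suc j) \<in> H\<close>]
    unfolding kappa0_eq by simp
qed

lemma norm_p_le_C0: "j \<le> N \<Longrightarrow> norm (p j) \<le> C0"
proof (induction j)
  case (Suc j)
  then show ?case using norm_p_step_le[of j] C0_bounds(2) by simp
qed (simp add: C0_bounds(1))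

abbreviation augL_iter :: "real \<Rightarrow> nat \<Rightarrow> real" where
  "augL_iter ct i \<equiv> augL K f h g ct (z i) (p i)"

lemma augL_iter_multiplier_step_le:
  assumes "j \<in> {1..N}" "c j = ct"
  shows "augL_iter ct j \<le> augL K f h g ct (z j) (p (j - 1)) + 4 * C0\<^sup>2 / ct"
proof -
  have "ct > 0" using c_pos[of j] assms by simp
  have "norm (p j) \<le> C0" "norm (p (j - 1)) \<le> C0" using norm_p_le_C0 assms(1) by auto
  then have "norm (p j - p (j - 1)) \<le> C0 + C0"
    using norm_triangle_ineq4[of "p j" "p (j - 1)"] by linarith
  then have "(norm (p j - p (j - 1)))\<^sup>2 \<le> (2 * C0)\<^sup>2" by (intro power_mono) auto
  then have "(norm (p j - p (j - 1)))\<^sup>2 / ct \<le> 4 * C0\<^sup>2 / ct"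
    using \<open>ct > 0\<close> by (simp add: divide_right_mono power_mult_distrib)
  moreover have "p j = projK K (p (j - 1) + ct *\<^sub>R g (z j))"
    using bspec[OF multiplier_step assms(1)] assms(2) by simp
  then have "augL_iter ct j \<le> augL K f h g ct (z j) (p (j - 1)) + (norm (p j - p (j - 1)))\<^sup>2 / ct"
    by (rule augL_update_multiplier_le[OF \<open>ct > 0\<close>])
  ultimately show ?thesis by linarith
qed

lemma residual_descent:
  assumes "j \<in> {1..N}" "c j = ct"
  shows "(norm (r j))\<^sup>2 \<le> 2 * lam / (1 - \<sigma>\<^sup>2) * (augL_iter ct (j - 1) - augL_iter ct j + 4 * C0\<^sup>2 / ct)"
proof -
  have "\<sigma>\<^sup>2 / Lpsi j \<le> \<sigma>\<^sup>2 / 1" using Lpsi_ge_1[OF assms(1)] by (intro divide_left_mono) auto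
  moreover have "v j \<in> eps_subdiff H
      (\<lambda>u. lam * augL K f h g ct u (p (j - 1)) + 1 / 2 * (norm (u - z (j - 1)))\<^sup>2) (eps j) (z j)"
    using bspec[OF prox_step assms(1)] assms(2) by simp
  moreover have "z (j - 1) \<in> H" by (rule z_in_H) (use assms(1) in auto)
  ultimately have "(1 - \<sigma>\<^sup>2) / 2 * (norm (r j))\<^sup>2
      \<le> lam * (augL_iter ct (j - 1) - augL K f h g ct (z j) (p (j - 1)))"
    using inexact_prox_descent[OF _ _ prox_err_Lpsi[OF assms(1)]] unfolding r_eq by simp
  also have "\<dots> \<le> lam * (augL_iter ct (j - 1) - augL_iter ct j + 4 * C0\<^sup>2 / ct)"
    using augL_iter_multiplier_step_le[OF assms] lam_pos by simp
  finally show ?thesis using sigma_sq_le by (simp add: field_simps)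
qed

lemma augL_iter_le_feasible_inf:
  assumes "j \<in> {1..N}" "c j = ct"
  shows "augL_iter ct j \<le> Inf ((\<lambda>x. f x + h x) ` {x\<in>H. - g x \<in> K}) + Dh\<^sup>2 / lam + 4 * C0\<^sup>2 / ct"
proof -
  have "ct > 0" using c_pos[of j] assms by simp
  have "z (j - 1) \<in> H" by (rule z_in_H) (use assms(1) in auto)
  have sub: "v j \<in> eps_subdiff H
      (\<lambda>u. lam * augL K f h g ct u (p (j - 1)) + 1 / 2 * (norm (u - z (j - 1)))\<^sup>2) (eps j) (z j)"
    using bspec[OF prox_step assms(1)] assms(2) by simp
  have "\<sigma>\<^sup>2 / Lpsi j \<le> 1/2"
    using Lpsi_ge_1[OF assms(1)] sigma_sq_le divide_left_mono[of 1 "Lpsi j" "\<sigma>\<^sup>2"] by simp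
  have "augL K f h g ct (z j) (p (j - 1)) - Dh\<^sup>2 / lam \<le> f x + h x" if "x \<in> H" "- g x \<in> K" for x
  proof -
    have "lam * augL K f h g ct (z j) (p (j - 1))
        \<le> lam * augL K f h g ct x (p (j - 1)) + (norm (x - z (j - 1)))\<^sup>2"
      using inexact_prox_value_le[OF sub \<open>x \<in> H\<close> prox_err_Lpsi[OF assms(1)] \<open>\<sigma>\<^sup>2 / Lpsi j \<le> 1/2\<close>]
        bspec[OF eps_nonneg assms(1)] by simp
    also have "\<dots> \<le> lam * (f x + h x) + Dh\<^sup>2"
      using augL_le_of_feasible[where g = g and z = x and f = f and h = h and p = "p (j - 1)", OF K_cone \<open>ct > 0\<close> \<open>- g x \<in> K\<close>] lam_pos
        norm_diff_le_Dh[OF \<open>x \<in> H\<close> \<open>z (j - 1) \<in> H\<close>]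
      by (intro add_mono mult_left_mono power_mono) auto
    finally show ?thesis using lam_pos by (simp add: field_simps)
  qed
  then have "augL K f h g ct (z j) (p (j - 1)) - Dh\<^sup>2 / lam \<le> Inf ((\<lambda>x. f x + h x) ` {x\<in>H. - g x \<in> K})"
    using zbar_in_H zbar_feasible by (intro cINF_greatest) auto
  then show ?thesis using augL_iter_multiplier_step_le[OF assms] by linarith
qed

lemma augL_iter_ge_inf:
  assumes "j \<le> N" "ct > 0"
  shows "augL_iter ct j \<ge> Inf ((\<lambda>x. f x + h x) ` H) - C0\<^sup>2 / (2 * ct)"
proof -
  have "Inf ((\<lambda>x. f x + h x) ` H) \<le> f (z j) + h (z j)"
    using z_in_H[OF assms(1)] bdd_below_phi by (intro cInf_lower) auto
  moreover have "(norm (p j))\<^sup>2 / (2 * ct) \<le> C0\<^sup>2 / (2 * ct)"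
    using norm_p_le_C0[OF assms(1)] assms(2) by (intro divide_right_mono power_mono) auto
  ultimately show ?thesis using augL_ge[where K = K and f = f and h = h and g = g and z = "z j" and p = "p j", OF assms(2)] by linarith
qed

lemma window_min_residual_le:
  assumes "a + 2 \<le> k" "k \<le> N" and const: "\<And>j. j \<in> {a + 1..k} \<Longrightarrow> c j = ct"
  shows "Min ((\<lambda>j. (norm (r j))\<^sup>2) ` {a + 2..k})
    \<le> 2 * lam / (1 - \<sigma>\<^sup>2) * ((augL_iter ct (a + 1) - augL_iter ct k) / real (k - a - 1) + 4 * C0\<^sup>2 / ct)"
proof -
  define n where "n = k - a - 1"
  have "real n > 0" "card {a + 2..k} = n" using assms(1) unfolding n_def by auto
  have "real (card {a + 2..k}) * Min ((\<lambda>j. (norm (r j))\<^sup>2) ` {a + 2..k}) \<le> (\<Sum>j\<in>{a + 2..k}. (norm (r j))\<^sup>2)"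
    by (intro sum_bounded_below) auto
  then have "real n * Min ((\<lambda>j. (norm (r j))\<^sup>2) ` {a + 2..k}) \<le> (\<Sum>j\<in>{a + 2..k}. (norm (r j))\<^sup>2)"
    unfolding \<open>card {a + 2..k} = n\<close> .
  also have "\<dots> \<le> (\<Sum>j\<in>{a + 2..k}. 2 * lam / (1 - \<sigma>\<^sup>2) * (augL_iter ct (j - 1) - augL_iter ct j + 4 * C0\<^sup>2 / ct))"
    using residual_descent const assms(2) by (intro sum_mono) auto
  also have "\<dots> = 2 * lam / (1 - \<sigma>\<^sup>2) * ((augL_iter ct (a + 1) - augL_iter ct k) + real n * (4 * C0\<^sup>2 / ct))"
  proof -
    have "(\<Sum>j\<in>{Suc (a + 1)..k}. (- augL_iter ct j) - (- augL_iter ct (j - 1)))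
        = - augL_iter ct k - (- augL_iter ct (a + 1))"
      using assms(1) by (intro sum_telescope'') simp
    then have tel: "(\<Sum>j\<in>{a + 2..k}. augL_iter ct (j - 1) - augL_iter ct j) = augL_iter ct (a + 1) - augL_iter ct k"
      by (simp add: algebra_simps)
    show ?thesis
      unfolding sum_distrib_left[symmetric] sum.distrib tel using \<open>card {a + 2..k} = n\<close> by simp
  qed
  also have "\<dots> = real n * (2 * lam / (1 - \<sigma>\<^sup>2) * ((augL_iter ct (a + 1) - augL_iter ct k) / real n + 4 * C0\<^sup>2 / ct))"
    using \<open>real n > 0\<close> by (simp add: distrib_left)
  finally show ?thesis using \<open>real n > 0\<close> unfolding n_def by (rule mult_left_le_imp_le)
qed

lemma window_decrease_le:
  assumes "a + 2 \<le> k" "k \<le> N" and const: "\<And>j. j \<in> {a + 1..k} \<Longrightarrow> c j = ct"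
  shows "(augL_iter ct (a + 1) - augL_iter ct k) / real (k - a - 1)
    \<le> 1 / real (k - a - 1) * (Inf ((\<lambda>x. f x + h x) ` {x\<in>H. - g x \<in> K}) - Inf ((\<lambda>x. f x + h x) ` H)
        + Dh\<^sup>2 / lam + 9 * C0\<^sup>2 / (2 * ct))"
proof -
  have "ct > 0" using c_pos[of k] const[of k] assms by simp
  have "augL_iter ct (a + 1) - augL_iter ct k
      \<le> Inf ((\<lambda>x. f x + h x) ` {x\<in>H. - g x \<in> K}) - Inf ((\<lambda>x. f x + h x) ` H) + Dh\<^sup>2 / lam
        + (4 * C0\<^sup>2 / ct + C0\<^sup>2 / (2 * ct))"
    using augL_iter_le_feasible_inf[of "a + 1" ct] augL_iter_ge_inf[OF assms(2) \<open>ct > 0\<close>] const[of "a + 1"] assms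
    by simp
  also have "4 * C0\<^sup>2 / ct + C0\<^sup>2 / (2 * ct) = 9 * C0\<^sup>2 / (2 * ct)" using \<open>ct > 0\<close> by (simp add: field_simps)
  finally show ?thesis using assms(1) by (simp add: divide_right_mono)
qed

end

theorem lemma4p7:
  fixes K :: "'b::euclidean_space set"
    and f :: "'a::euclidean_space \<Rightarrow> real" and gf :: "'a \<Rightarrow> 'a"
    and h :: "'a \<Rightarrow> real" and H :: "'a set" and U :: "'a set"
    and g :: "'a \<Rightarrow> 'b" and g' :: "'a \<Rightarrow> 'a \<Rightarrow> 'b"
    and mf Lf Lg Kh tau lam sigma rhohat etahat :: real and zbar :: "'a"
    and z v :: "nat \<Rightarrow> 'a" and eps c :: "nat \<Rightarrow> real" and p :: "nat \<Rightarrow> 'b"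
    and khat :: "nat \<Rightarrow> nat" and N l k :: nat
    and Dh Bf1 Bg0 Bg1 dbar kappa0 C0 phiup philow Rphi :: real
    and Lpsi :: "nat \<Rightarrow> real" and r :: "nat \<Rightarrow> 'a" and kprev :: nat and Delta :: real
  assumes K_ne: "K \<noteq> {}" and K_closed: "closed K" and K_convex: "convex K" and K_cone: "cone K"
    and B1_ne: "H \<noteq> {}" and B1_compact: "compact H" and B1_convex: "convex H"
    and B1_h_convex: "convex_on H h"
    and B1_Kh: "0 \<le> Kh" and B1_lip: "\<forall>x\<in>H. \<forall>y\<in>H. \<bar>h x - h y\<bar> \<le> Kh * dist x y"
    and B2_open: "open U" and B2_sub: "H \<subseteq> U"
    and B2_diff: "\<forall>x\<in>U. (f has_derivative (\<lambda>d. gf x \<bullet> d)) (at x)"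
    and B2_mf: "mf > 0" and B2_Lf: "Lf > 0"
    and B2_weak: "\<forall>x\<in>H. \<forall>y\<in>H. f y - f x - gf x \<bullet> (y - x) \<ge> - (mf / 2) * (norm (y - x))\<^sup>2"
    and B2_lipgrad: "\<forall>x\<in>H. \<forall>y\<in>H. norm (gf y - gf x) \<le> Lf * norm (y - x)"
    and B3_Kconv: "K_convex K g"
    and B3_diff: "\<forall>x. (g has_derivative g' x) (at x)"
    and B3_Lg: "0 \<le> Lg"
    and B3_lip: "\<forall>x y. onorm (\<lambda>q. adjoint (g' x) q - adjoint (g' y) q) \<le> Lg * norm (x - y)"
    and B4_int: "zbar \<in> interior H" and B4_tau: "0 < tau" "tau \<le> 1"
    and B4_feas: "- g zbar \<in> K"
    and B4_reg: "\<forall>x\<in>H. \<forall>q\<in>dual_cone K.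
                   max (norm (adjoint (g' x) q)) \<bar>q \<bullet> g zbar\<bar> \<ge> tau * norm q"
    and Dh_def: "Dh \<equiv> diameter H"
    and Bf1_def: "Bf1 \<equiv> Sup ((\<lambda>x. norm (gf x)) ` H)"
    and Bg0_def: "Bg0 \<equiv> Sup ((\<lambda>x. norm (g x)) ` H)"
    and Bg1_def: "Bg1 \<equiv> Sup ((\<lambda>x. onorm (adjoint (g' x))) ` H)"
    and dbar_def: "dbar \<equiv> infdist zbar (frontier H)"
    and kappa0_def: "kappa0 \<equiv> 2 * (Kh + Bf1) * Dh
        + (sigma\<^sup>2 / (2 * (1 - sigma)\<^sup>2) + 2 * ((1 + sigma) / (1 - sigma))) * Dh\<^sup>2 / lam"
    and phiup_def: "phiup \<equiv> Inf ((\<lambda>x. f x + h x) ` {x\<in>H. - g x \<in> K})"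
    and philow_def: "philow \<equiv> Inf ((\<lambda>x. f x + h x) ` H)"
    and Rphi_def: "Rphi \<equiv> phiup - philow + Dh\<^sup>2 / lam"
    and C0_def: "C0 \<equiv> max (norm (p 0)) kappa0 / (min 1 dbar * tau)"
    and lam_pos: "0 < lam" and lam_le: "lam \<le> 1 / (2 * mf)"
    and sigma_pos: "0 < sigma" and sigma_le: "sigma \<le> 1 / sqrt 2"
    and c1_pos: "c 1 > 0" and z0_in: "z 0 \<in> H"
    and rho_pos: "rhohat > 0" and eta_pos: "etahat > 0"
    and khat1: "khat 1 = 0"
  (* iterations k = 1..N are all carried out through step (3) *)
    and Lpsi_def: "Lpsi \<equiv> (\<lambda>j. lam * (Lf + Lg * norm (p (j - 1)) + c j * (Bg0 * Lg + Bg1\<^sup>2)) + 1)"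
    and r_def: "r \<equiv> (\<lambda>j. v j + z (j - 1) - z j)"
    and step1_sub: "\<forall>j\<in>{1..N}. v j \<in> eps_subdiff H
          (\<lambda>u. lam * augL K f h g (c j) u (p (j - 1)) + 1 / 2 * (norm (u - z (j - 1)))\<^sup>2) (eps j) (z j)"
    and step1_eps: "\<forall>j\<in>{1..N}. eps j \<ge> 0"
    and step1_err: "\<forall>j\<in>{1..N}. (norm (v j))\<^sup>2 + 2 * eps j
                        \<le> (sigma / sqrt (Lpsi j))\<^sup>2 * (norm (r j))\<^sup>2"
    and step2_nostop: "\<forall>j\<in>{1..N}.
          let gz = gradLt K gf g' g (c j) (z j) (p (j - 1));
              zh = prox_hat H h lam gz (r j) (Lpsi j) (z j);
              w = (1 / lam) *\<^sub>R (r j + Lpsi j *\<^sub>R (z j - zh));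
              ph = projK K (p (j - 1) + c j *\<^sub>R g zh);
              qh = (1 / c j) *\<^sub>R (p (j - 1) - ph);
              wh = w + gradLt K gf g' g (c j) zh (p (j - 1)) - gz
          in \<not> (norm wh \<le> rhohat \<and> norm qh \<le> etahat)"
    and step3: "\<forall>j\<in>{1..N}. p j = projK K (p (j - 1) + c j *\<^sub>R g (z j))"
    and step4: "\<forall>j\<in>{1..N}.
          if j > khat j + 1 \<and>
             (augL K f h g (c j) (z (khat j + 1)) (p (khat j + 1)) - augL K f h g (c j) (z j) (p j))
               / real (j - khat j - 1)
             \<le> lam * (1 - sigma\<^sup>2) * rhohat\<^sup>2 / (4 * (1 + 2 * sigma)\<^sup>2)
          then c (j + 1) = 2 * c j \<and> khat (j + 1) = j
          else c (j + 1) = c j \<and> khat (j + 1) = khat j"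
    and l_ge: "l \<ge> 1" and k_in: "k \<in> {1..N}" and k_cycle: "c k = 2 ^ (l - 1) * c 1"
    and kprev_def: "kprev \<equiv> (if l = 1 then 0 else Max {j\<in>{1..N}. c j = 2 ^ (l - 2) * c 1})"
    and k_ge: "k \<ge> kprev + 2"
    and Delta_def: "Delta \<equiv> (augL K f h g (2 ^ (l - 1) * c 1) (z (kprev + 1)) (p (kprev + 1))
                            - augL K f h g (2 ^ (l - 1) * c 1) (z k) (p k)) / real (k - kprev - 1)"
  shows "Min ((\<lambda>j. (norm (r j))\<^sup>2) ` {kprev + 2..k})
           \<le> 2 * lam / (1 - sigma\<^sup>2) * (Delta + 4 * C0\<^sup>2 / (2 ^ (l - 1) * c 1))
         \<and> Delta \<le> (1 / real (k - kprev - 1)) * (Rphi + 9 * C0\<^sup>2 / (2 * (2 ^ (l - 1) * c 1)))"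
proof -
  have c_step: "c (j + 1) = c j \<or> c (j + 1) = 2 * c j" if "j \<in> {1..N}" for j
    using bspec[OF step4 that] by (simp split: if_split_asm)
  have "sigma\<^sup>2 \<le> (1 / sqrt 2)\<^sup>2" using sigma_pos sigma_le by (intro power_mono) auto
  then have sigma_sq: "sigma\<^sup>2 \<le> 1/2" by (simp add: power_divide)
  have f_deriv: "\<forall>x\<in>H. (f has_derivative (\<lambda>d. gf x \<bullet> d)) (at x)" using B2_diff B2_sub by blast
  have Lf_nonneg: "0 \<le> Lf" using B2_Lf by simp
  interpret nl_iapial K H h f gf g g' Kh Lf Lg tau zbar Dh Bf1 Bg0 Bg1 dbar c N lam sigma z v eps p Lpsi r kappa0 C0
    by (intro nl_iapial.intro iapial_problem.intro closed_convex_cone.intro iapial_problem_axioms.intro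
        doubling_sequence.intro nl_iapial_axioms.intro)
      (fact K_closed K_convex K_cone K_ne B1_compact B1_convex B1_h_convex B1_Kh B1_lip f_deriv Lf_nonneg
        B2_lipgrad B3_Kconv B3_diff B3_Lg B3_lip B4_int B4_tau B4_feas B4_reg c1_pos c_step lam_pos sigma_pos
        sigma_sq z0_in step1_sub step1_eps step1_err step3
        Dh_def[THEN meta_eq_to_obj_eq] Bf1_def[THEN meta_eq_to_obj_eq] Bg0_def[THEN meta_eq_to_obj_eq]
        Bg1_def[THEN meta_eq_to_obj_eq] dbar_def[THEN meta_eq_to_obj_eq] Lpsi_def[THEN meta_eq_to_obj_eq]
        r_def[THEN meta_eq_to_obj_eq] kappa0_def[THEN meta_eq_to_obj_eq] C0_def[THEN meta_eq_to_obj_eq])+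
  define ct where "ct = 2 ^ (l - 1) * c 1"
  have const: "c j = ct" if "j \<in> {kprev + 1..k}" for j
    using c_const_on_cycle[OF l_ge k_in k_cycle kprev_def[THEN meta_eq_to_obj_eq] that] unfolding ct_def .
  have window: "kprev + 2 \<le> k" "k \<le> N" using k_ge k_in by auto
  show ?thesis
    unfolding Delta_def Rphi_def phiup_def philow_def ct_def[symmetric]
    by (intro conjI window_min_residual_le[OF window const] window_decrease_le[OF window const])
qed

end
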